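(* Let $G$ be a channel metric satisfying axioms (M), (E) and (N). Then for every channel $\Phi$ and every tangent vector $\Delta$ at $\Phi$, \[ G_\Phi(\Delta)\ \le\ G^{\max}_\Phi(\Delta). \] Moreover, $G^{\max}$ is itself a channel metric satisfying (M), (E) and (N).
   Context: All Hilbert spaces are finite-dimensional. A channel $\Phi$ from $\mathcal H_{\rm in}$ to $\mathcal H_{\rm out}$ is a CPTP linear map from operators on $\mathcal H_{\rm in}$ to operators on $\mathcal H_{\rm out}$. A probability distribution $p$ on a finite set $Y$ is identified with the diagonal state $\sum_y p(y)|y\rangle\langle y|$ on $\mathbb C^Y$; a quantum state $\rho$ on $\mathcal H$ is identified with the channel from the trivial system $\mathbb C$ to $\mathcal H$ with output $\rho$. A tangent vector $\Delta$ at a channel $\Phi$ is a Hermiticity-preserving linear map with $\mathrm{tr}\,\Delta(X)=0$ for all $X$; compositions and tensor products with channels are tangent vectors at the corresponding composite channels. For a probability distribution $p$ on a finite set and a tangent vector $\delta$ at $p$ (real function with $\sum_y\delta(y)=0$), $J_p(\delta)=\sum_y\delta(y)^2/p(y)$ (with $0/0=0$, $c/0=\infty$ for $c\ne0$). A channel metric $G$ assigns to every channel $\Phi$ and tangent vector $\Delta$ at $\Phi$ a value $G_\Phi(\Delta)\in[0,\infty]$ with $G_\Phi(t\Delta)=t^2G_\Phi(\Delta)$. Axioms: (M) $G_\Phi(\Delta)\ge G_{\Phi\circ\Psi}(\Delta\circ\Psi)$ and $G_\Phi(\Delta)\ge G_{\Psi\circ\Phi}(\Psi\circ\Delta)$ for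 all channels $\Psi$ for which compositions are defined; (E) $G_{\Phi\otimes\mathbf I}(\Delta\otimes\mathbf I)=G_\Phi(\Delta)$ for the identity channel $\mathbf I$ on any auxiliary system; (N) $G_p(\delta)=J_p(\delta)$ for every probability distribution $p$ on a finite set and tangent $\delta$ at $p$. A classical tangent simulation of $(\Phi,\Delta)$ is a triple $(q,\delta,\Lambda)$ with $q$ a probability distribution on a finite set $Y$, $\delta$ a real function on $Y$ with $\sum_y\delta(y)=0$, and $\Lambda$ a channel from $\mathcal H_{\rm in}\otimes\mathbb C^Y$ to $\mathcal H_{\rm out}$ such that $\Phi(X)=\Lambda(X\otimes q)$ and $\Delta(X)=\Lambda(X\otimes\delta)$ for all operators $X$ on $\mathcal H_{\rm in}$ ($q,\delta$ viewed as diagonal operators). Definition: $G^{\max}_\Phi(\Delta):=\inf J_q(\delta)$ over all classical tangent simulations $(q,\delta,\Lambda)$ of $(\Phi,\Delta)$ (with $\inf\emptyset=\infty$). *)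

theory Defs
  imports Complex_Main "Jordan_Normal_Form.Matrix" "HOL-Library.Extended_Nonnegative_Real"
begin

text \<open>Hilbert space C^n is represented by its dimension n (n >= 1); operators on C^n are
  complex n x n matrices. A linear map from operators on C^n to operators on C^m is a
  function on complex matrices, normalised to return the zero m x m matrix outside
  carrier_mat n n, so that maps which agree as maps on operators are equal as HOL terms.\<close>

type_synonym smap = "complex mat \<Rightarrow> complex mat"

definition restr :: "nat \<Rightarrow> nat \<Rightarrow> smap \<Rightarrow> smap" where
  "restr n m f = (\<lambda>X. if X \<in> carrier_mat n n then f X else 0\<^sub>m m m)"

definition mtrace :: "complex mat \<Rightarrow> complex" where
  "mtrace A = (\<Sum>i<dim_row A. A $$ (i, i))"

definition adj :: "complex mat \<Rightarrow> complex mat" where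
  "adj A = mat (dim_col A) (dim_row A) (\<lambda>(i, j). cnj (A $$ (j, i)))"

definition psd :: "nat \<Rightarrow> complex mat \<Rightarrow> bool" where
  "psd n A \<longleftrightarrow> A \<in> carrier_mat n n \<and>
     (\<forall>v \<in> carrier_vec n.
        (let z = (\<Sum>i<n. \<Sum>j<n. cnj (v $ i) * A $$ (i, j) * v $ j) in Im z = 0 \<and> Re z \<ge> 0))"

text \<open>Kronecker product; index (i, k) of A (x) B is i * dim B + k\<close>
definition kron :: "complex mat \<Rightarrow> complex mat \<Rightarrow> complex mat" where
  "kron A B = mat (dim_row A * dim_row B) (dim_col A * dim_col B)
     (\<lambda>(r, s). A $$ (r div dim_row B, s div dim_col B) * B $$ (r mod dim_row B, s mod dim_col B))"

definition diagm :: "nat \<Rightarrow> (nat \<Rightarrow> real) \<Rightarrow> complex mat" where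
  "diagm k p = mat k k (\<lambda>(i, j). if i = j then complex_of_real (p i) else 0)"

definition lin_map :: "nat \<Rightarrow> nat \<Rightarrow> smap \<Rightarrow> bool" where
  "lin_map n m f \<longleftrightarrow> 1 \<le> n \<and> 1 \<le> m \<and>
     (\<forall>X. X \<notin> carrier_mat n n \<longrightarrow> f X = 0\<^sub>m m m) \<and>
     (\<forall>X \<in> carrier_mat n n. f X \<in> carrier_mat m m) \<and>
     (\<forall>X \<in> carrier_mat n n. \<forall>Y \<in> carrier_mat n n. f (X + Y) = f X + f Y) \<and>
     (\<forall>c. \<forall>X \<in> carrier_mat n n. f (c \<cdot>\<^sub>m X) = c \<cdot>\<^sub>m f X)"

text \<open>the (n x n)-block X_{kl} of an (n*d) x (n*d) matrix, X = sum_{k,l} X_{kl} (x) E_{kl}\<close>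
definition blk :: "nat \<Rightarrow> nat \<Rightarrow> complex mat \<Rightarrow> nat \<Rightarrow> nat \<Rightarrow> complex mat" where
  "blk n d X k l = mat n n (\<lambda>(i, j). X $$ (i * d + k, j * d + l))"

text \<open>f (x) I_d, where I_d is the identity channel on the auxiliary system C^d\<close>
definition tensor_id :: "nat \<Rightarrow> nat \<Rightarrow> nat \<Rightarrow> smap \<Rightarrow> smap" where
  "tensor_id n m d f = restr (n * d) (m * d)
     (\<lambda>X. mat (m * d) (m * d) (\<lambda>(r, s). f (blk n d X (r mod d) (s mod d)) $$ (r div d, s div d)))"

definition channel :: "nat \<Rightarrow> nat \<Rightarrow> smap \<Rightarrow> bool" where
  "channel n m f \<longleftrightarrow> lin_map n m f \<and>
     (\<forall>X \<in> carrier_mat n n. mtrace (f X) = mtrace X) \<and>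
     (\<forall>d \<ge> 1. \<forall>X. psd (n * d) X \<longrightarrow> psd (m * d) (tensor_id n m d f X))"

definition tangent :: "nat \<Rightarrow> nat \<Rightarrow> smap \<Rightarrow> bool" where
  "tangent n m D \<longleftrightarrow> lin_map n m D \<and>
     (\<forall>X \<in> carrier_mat n n. D (adj X) = adj (D X)) \<and>
     (\<forall>X \<in> carrier_mat n n. mtrace (D X) = 0)"

definition scale :: "real \<Rightarrow> smap \<Rightarrow> smap" where
  "scale t D = (\<lambda>X. complex_of_real t \<cdot>\<^sub>m D X)"

text \<open>probability distributions on a finite set, identified with {0..<k}\<close>
definition prob_dist :: "nat \<Rightarrow> (nat \<Rightarrow> real) \<Rightarrow> bool" where
  "prob_dist k p \<longleftrightarrow> (\<forall>y<k. 0 \<le> p y) \<and> (\<Sum>y<k. p y) = 1"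

definition tangent_dist :: "nat \<Rightarrow> (nat \<Rightarrow> real) \<Rightarrow> bool" where
  "tangent_dist k \<delta> \<longleftrightarrow> (\<Sum>y<k. \<delta> y) = 0"

text \<open>a diagonal operator on C^k viewed as a map from the trivial system C = C^1\<close>
definition cl :: "nat \<Rightarrow> (nat \<Rightarrow> real) \<Rightarrow> smap" where
  "cl k p = restr 1 k (\<lambda>X. (X $$ (0, 0)) \<cdot>\<^sub>m diagm k p)"

definition J :: "nat \<Rightarrow> (nat \<Rightarrow> real) \<Rightarrow> (nat \<Rightarrow> real) \<Rightarrow> ennreal" where
  "J k p \<delta> = (\<Sum>y<k. if p y = 0 then (if \<delta> y = 0 then 0 else \<infinity>) else ennreal ((\<delta> y)\<^sup>2 / p y))"

type_synonym cmetric = "nat \<Rightarrow> nat \<Rightarrow> smap \<Rightarrow> smap \<Rightarrow> ennreal"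

definition channel_metric :: "cmetric \<Rightarrow> bool" where
  "channel_metric G \<longleftrightarrow> (\<forall>n m Phi D t. channel n m Phi \<and> tangent n m D \<longrightarrow>
     G n m Phi (scale t D) = ennreal (t\<^sup>2) * G n m Phi D)"

definition axiom_M :: "cmetric \<Rightarrow> bool" where
  "axiom_M G \<longleftrightarrow> (\<forall>n m Phi D. channel n m Phi \<and> tangent n m D \<longrightarrow>
     (\<forall>k Psi. channel k n Psi \<longrightarrow> G k m (Phi \<circ> Psi) (D \<circ> Psi) \<le> G n m Phi D) \<and>
     (\<forall>k Psi. channel m k Psi \<longrightarrow> G n k (Psi \<circ> Phi) (Psi \<circ> D) \<le> G n m Phi D))"

definition axiom_E :: "cmetric \<Rightarrow> bool" where
  "axiom_E G \<longleftrightarrow> (\<forall>n m Phi D d. channel n m Phi \<and> tangent n m D \<and> 1 \<le> d \<longrightarrow>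
     G (n * d) (m * d) (tensor_id n m d Phi) (tensor_id n m d D) = G n m Phi D)"

definition axiom_N :: "cmetric \<Rightarrow> bool" where
  "axiom_N G \<longleftrightarrow> (\<forall>k p \<delta>. prob_dist k p \<and> tangent_dist k \<delta> \<longrightarrow>
     G 1 k (cl k p) (cl k \<delta>) = J k p \<delta>)"

definition classical_sim :: "nat \<Rightarrow> nat \<Rightarrow> smap \<Rightarrow> smap \<Rightarrow> nat \<Rightarrow> (nat \<Rightarrow> real) \<Rightarrow> (nat \<Rightarrow> real) \<Rightarrow> smap \<Rightarrow> bool" where
  "classical_sim n m Phi D k q \<delta> Lam \<longleftrightarrow> prob_dist k q \<and> tangent_dist k \<delta> \<and>
     channel (n * k) m Lam \<and>
     (\<forall>X \<in> carrier_mat n n. Phi X = Lam (kron X (diagm k q)) \<and> D X = Lam (kron X (diagm k \<delta>)))"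

definition Gmax :: cmetric where
  "Gmax n m Phi D = Inf {J k q \<delta> | k q \<delta> Lam. classical_sim n m Phi D k q \<delta> Lam}"

end

theory Submission
  imports Defs
begin

(* Let (q, delta, Lam) be a classical tangent simulation of (Phi, D) with
   Y = {0..<k}.  Preparing q (resp. delta) on C^k alongside the input and swapping the two
   tensor factors gives Phi = Lam' o (q (x) I_n) and D = Lam' o (delta (x) I_n).  Hence
   G(Phi, D) <= G(q (x) I_n, delta (x) I_n) by (M), which equals G(q, delta) by (E) and
   J_q(delta) by (N).  Taking the infimum over simulations gives G <= Gmax.

   Simulations can be pushed through pre- and post-composition
   (M), through tensoring with an identity after reshuffling tensor factors (E, one direction;
   the other comes from (M) via a corner embedding and a partial trace) and through scaling of
   the tangent (homogeneity).  For (N), any simulation of a classical pair (p, delta) induces a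
   stochastic matrix mapping (q, delta') to (p, delta), and J contracts under stochastic maps
   (a weighted Cauchy-Schwarz inequality). *)

(* Sums over {..<n*d}: an index r < n*d is a pair (r div d, r mod d) in row-major order. *)
lemma sum_lessThan_add: "(\<Sum>r<a+(b::nat). g r) = (\<Sum>r<a. g r) + (\<Sum>r<b. (g (a+r)::'a::comm_monoid_add))"
  by (induct b) (auto simp: add.assoc)

lemma sum_split_mult: "(\<Sum>r<(n::nat)*d. g r) = (\<Sum>i<n. \<Sum>a<d. (g (i*d+a)::'a::comm_monoid_add))"
proof (induct n)
  case (Suc n)
  have "(\<Sum>r<Suc n*d. g r) = (\<Sum>r<n*d + d. g r)" by (simp add: add.commute)
  also have "\<dots> = (\<Sum>r<n*d. g r) + (\<Sum>a<d. g (n*d+a))" by (rule sum_lessThan_add)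
  finally show ?case using Suc by simp
qed simp

lemma sum_swap_split: "(\<Sum>r<(n::nat)*k. g r) = (\<Sum>y<k. \<Sum>i<n. g (i*k+y))"
  unfolding sum_split_mult by (rule sum.swap)

lemma div_lt_mult: "r < m*d \<Longrightarrow> r div d < (m::nat)"
  by (simp add: less_mult_imp_div_less)

lemma mod_lt_mult: "r < m*d \<Longrightarrow> r mod d < (d::nat)"
  by (metis mod_less_divisor mult_0_right not_less_zero gr0I)

lemma block_idx_lt: assumes "i < (m::nat)" "a < d" shows "i*d+a < m*d"
proof -
  have "i*d + a < i*d + d" using assms by simp
  also have "\<dots> = Suc i * d" by simp
  also have "\<dots> \<le> m*d" using assms by (intro mult_le_mono1) simp
  finally show ?thesis .
qed

lemma block_idx_eq_corner: assumes "a < (d::nat)" shows "(i*d+a = k*d) \<longleftrightarrow> (a = 0 \<and> k = i)"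
proof
  assume h: "i*d+a = k*d"
  hence "(i*d+a) mod d = (k*d) mod d" by simp
  hence a0: "a = 0" using assms by simp
  with h have "i*d = k*d" by simp
  thus "a = 0 \<and> k = i" using a0 assms by simp
qed auto

lemma sum_mod_sel: assumes "c0 < (d::nat)"
  shows "(\<Sum>u<n*d. if c0 = u mod d then g u else 0) = (\<Sum>k<n. (g (k*d + c0) :: 'a::comm_monoid_add))"
proof -
  have "(\<Sum>u<n*d. if c0 = u mod d then g u else 0) = (\<Sum>k<n. \<Sum>c<d. if c0 = (k*d+c) mod d then g (k*d+c) else 0)"
    by (rule sum_split_mult)
  also have "\<dots> = (\<Sum>k<n. \<Sum>c<d. if c0 = c then g (k*d+c) else 0)"
    by (rule sum.cong[OF refl], rule sum.cong[OF refl]) simp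
  also have "\<dots> = (\<Sum>k<n. g (k*d + c0))" using assms by simp
  finally show ?thesis .
qed

lemma sum_rotate3: "(\<Sum>x\<in>A. \<Sum>y\<in>B. \<Sum>z\<in>C. g x y z) = (\<Sum>y\<in>B. \<Sum>z\<in>C. \<Sum>x\<in>A. (g x y z :: 'z::comm_monoid_add))"
proof -
  have "(\<Sum>x\<in>A. \<Sum>y\<in>B. \<Sum>z\<in>C. g x y z) = (\<Sum>y\<in>B. \<Sum>x\<in>A. \<Sum>z\<in>C. g x y z)" by (rule sum.swap)
  also have "\<dots> = (\<Sum>y\<in>B. \<Sum>z\<in>C. \<Sum>x\<in>A. g x y z)" by (rule sum.cong[OF refl], rule sum.swap)
  finally show ?thesis .
qed

lemma sum_rotate4: "(\<Sum>x\<in>A. \<Sum>y\<in>B. \<Sum>z\<in>C. \<Sum>w\<in>D. g x y z w) = (\<Sum>y\<in>B. \<Sum>z\<in>C. \<Sum>w\<in>D. \<Sum>x\<in>A. (g x y z w :: 'z::comm_monoid_add))"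
proof -
  have "(\<Sum>x\<in>A. \<Sum>y\<in>B. \<Sum>z\<in>C. \<Sum>w\<in>D. g x y z w) = (\<Sum>y\<in>B. \<Sum>x\<in>A. \<Sum>z\<in>C. \<Sum>w\<in>D. g x y z w)" by (rule sum.swap)
  also have "\<dots> = (\<Sum>y\<in>B. \<Sum>z\<in>C. \<Sum>w\<in>D. \<Sum>x\<in>A. g x y z w)" by (rule sum.cong[OF refl], rule sum_rotate3)
  finally show ?thesis .
qed

lemma sum_rotate5: "(\<Sum>i\<in>A. \<Sum>j\<in>B. \<Sum>a\<in>C. \<Sum>k\<in>D. \<Sum>l\<in>E. f i j a k l) =
   (\<Sum>a\<in>C. \<Sum>k\<in>D. \<Sum>l\<in>E. \<Sum>i\<in>A. \<Sum>j\<in>B. (f i j a k l :: 'z::comm_monoid_add))"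
proof -
  have "(\<Sum>i\<in>A. \<Sum>j\<in>B. \<Sum>a\<in>C. \<Sum>k\<in>D. \<Sum>l\<in>E. f i j a k l) =
        (\<Sum>i\<in>A. \<Sum>a\<in>C. \<Sum>k\<in>D. \<Sum>l\<in>E. \<Sum>j\<in>B. f i j a k l)"
    by (rule sum.cong[OF refl], rule sum_rotate4)
  also have "\<dots> = (\<Sum>a\<in>C. \<Sum>k\<in>D. \<Sum>l\<in>E. \<Sum>i\<in>A. \<Sum>j\<in>B. f i j a k l)"
    by (rule sum_rotate4)
  finally show ?thesis .
qed

lemma cnj_if01[simp]: "cnj (if P then (1::complex) else 0) = (if P then 1 else 0)" by simp

lemma mult_if01[simp]: "(x::complex) * (if P then 1 else 0) = (if P then x else 0)"
  "(if P then 1 else 0) * (x::complex) = (if P then x else 0)" by simp_all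

lemma sum_double_delta: "k0 < (n::nat) \<Longrightarrow> l0 < n \<Longrightarrow>
  (\<Sum>k<n. \<Sum>l<n. (if k = k0 then 1 else 0) * (X::complex mat) $$ (k,l) * cnj (if l = l0 then 1 else 0)) = X $$ (k0,l0)"
proof -
  assume a: "k0 < n" "l0 < n"
  have "(\<Sum>k<n. \<Sum>l<n. (if k = k0 then 1 else 0) * X $$ (k,l) * cnj (if l = l0 then 1 else 0))
     = (\<Sum>k<n. if k = k0 then (\<Sum>l<n. if l = l0 then X $$ (k,l) else 0) else 0)"
  proof (rule sum.cong[OF refl])
    fix k show "(\<Sum>l<n. (if k = k0 then 1 else 0) * X $$ (k,l) * cnj (if l = l0 then 1 else 0)) =
      (if k = k0 then (\<Sum>l<n. if l = l0 then X $$ (k,l) else 0) else 0)"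
      by (cases "k = k0") (auto intro!: sum.cong)
  qed
  also have "\<dots> = X $$ (k0,l0)" using a by simp
  finally show ?thesis .
qed

lemma restr_in[simp]: "X \<in> carrier_mat n n \<Longrightarrow> restr n m f X = f X"
  by (simp add: restr_def)

lemma restr_out: "X \<notin> carrier_mat n n \<Longrightarrow> restr n m f X = 0\<^sub>m m m"
  by (simp add: restr_def)

lemma smult_zero_mat: "(0::complex) \<cdot>\<^sub>m A = 0\<^sub>m (dim_row A) (dim_col A)"
  by (rule eq_matI) auto

lemma dim_adj[simp]: "dim_row (adj A) = dim_col A" "dim_col (adj A) = dim_row A"
  by (simp_all add: adj_def)

lemma index_adj[simp]: "i < dim_col A \<Longrightarrow> j < dim_row A \<Longrightarrow> adj A $$ (i,j) = cnj (A $$ (j,i))"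
  by (simp add: adj_def)

lemma adj_carrier[simp]: "A \<in> carrier_mat n m \<Longrightarrow> adj A \<in> carrier_mat m n"
  unfolding carrier_mat_def by simp

lemma dim_kron[simp]: "dim_row (kron A B) = dim_row A * dim_row B" "dim_col (kron A B) = dim_col A * dim_col B"
  by (simp_all add: kron_def)

lemma index_kron: "r < dim_row A * dim_row B \<Longrightarrow> s < dim_col A * dim_col B \<Longrightarrow>
  kron A B $$ (r,s) = A $$ (r div dim_row B, s div dim_col B) * B $$ (r mod dim_row B, s mod dim_col B)"
  by (simp add: kron_def)

lemma kron_carrier: "A \<in> carrier_mat n n \<Longrightarrow> B \<in> carrier_mat k k \<Longrightarrow> kron A B \<in> carrier_mat (n*k) (n*k)"
  unfolding carrier_mat_def by simp

lemma diagm_carrier[simp]: "diagm k p \<in> carrier_mat k k"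
  by (simp add: diagm_def)

lemma dim_diagm[simp]: "dim_row (diagm k p) = k" "dim_col (diagm k p) = k"
  by (simp_all add: diagm_def)

lemma index_diagm[simp]: "i < k \<Longrightarrow> j < k \<Longrightarrow> diagm k p $$ (i,j) = (if i = j then complex_of_real (p i) else 0)"
  by (simp add: diagm_def)

lemma kron_one1: assumes B: "B \<in> carrier_mat k k" shows "kron (1\<^sub>m 1) B = B"
proof (rule eq_matI)
  fix r s assume "r < dim_row B" "s < dim_col B"
  thus "kron (1\<^sub>m 1) B $$ (r,s) = B $$ (r,s)" using B by (simp add: index_kron)
qed (use B in auto)

lemma kron_1x1: assumes X: "X \<in> carrier_mat 1 1" and B: "B \<in> carrier_mat k k" shows "kron X B = X $$ (0,0) \<cdot>\<^sub>m B"
proof (rule eq_matI)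
  fix r s assume "r < dim_row (X $$ (0,0) \<cdot>\<^sub>m B)" "s < dim_col (X $$ (0,0) \<cdot>\<^sub>m B)"
  thus "kron X B $$ (r,s) = (X $$ (0,0) \<cdot>\<^sub>m B) $$ (r,s)" using X B by (simp add: index_kron)
qed (use X B in auto)

lemma kron_diag1: assumes X: "X \<in> carrier_mat n n" shows "kron X (diagm 1 (\<lambda>_. c)) = complex_of_real c \<cdot>\<^sub>m X"
proof (rule eq_matI)
  fix r s assume "r < dim_row (complex_of_real c \<cdot>\<^sub>m X)" "s < dim_col (complex_of_real c \<cdot>\<^sub>m X)"
  thus "kron X (diagm 1 (\<lambda>_. c)) $$ (r,s) = (complex_of_real c \<cdot>\<^sub>m X) $$ (r,s)" using X by (simp add: index_kron mult.commute)
qed (use X in auto)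

lemma kron_diag_scale: "kron X (diagm k (\<lambda>y. t * \<delta> y)) = complex_of_real t \<cdot>\<^sub>m kron X (diagm k \<delta>)"
proof (rule eq_matI)
  fix r s assume rs: "r < dim_row (complex_of_real t \<cdot>\<^sub>m kron X (diagm k \<delta>))" "s < dim_col (complex_of_real t \<cdot>\<^sub>m kron X (diagm k \<delta>))"
  hence "r mod k < k" "s mod k < k" by (auto simp: mod_lt_mult)
  thus "kron X (diagm k (\<lambda>y. t * \<delta> y)) $$ (r,s) = (complex_of_real t \<cdot>\<^sub>m kron X (diagm k \<delta>)) $$ (r,s)"
    using rs by (simp add: index_kron)
qed simp_all

definition quad_form :: "nat \<Rightarrow> complex mat \<Rightarrow> complex vec \<Rightarrow> complex" where
  "quad_form n A v = (\<Sum>i<n. \<Sum>j<n. cnj (v $ i) * A $$ (i, j) * v $ j)"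

lemma psd_quad_form: "psd n A \<longleftrightarrow> A \<in> carrier_mat n n \<and> (\<forall>v \<in> carrier_vec n. Im (quad_form n A v) = 0 \<and> Re (quad_form n A v) \<ge> 0)"
  unfolding psd_def quad_form_def Let_def by simp

lemma psd_diag: assumes A: "psd k A" and y: "y < k" shows "Im (A $$ (y,y)) = 0" "Re (A $$ (y,y)) \<ge> 0"
proof -
  have "quad_form k A (unit_vec k y) = (\<Sum>i<k. \<Sum>j<k. if i = y \<and> j = y then A $$ (i,j) else 0)"
    unfolding quad_form_def using y by (intro sum.cong refl) auto
  also have "\<dots> = A $$ (y,y)"
  proof -
    have "(\<Sum>i<k. \<Sum>j<k. if i = y \<and> j = y then A $$ (i,j) else 0) = (\<Sum>i<k. if i = y then A $$ (i,y) else 0)"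
      using y by (intro sum.cong refl) (auto simp: if_distrib cong: if_cong)
    thus ?thesis using y by simp
  qed
  finally have e: "quad_form k A (unit_vec k y) = A $$ (y,y)" .
  show "Im (A $$ (y,y)) = 0" "Re (A $$ (y,y)) \<ge> 0" using A unfolding psd_quad_form e[symmetric] by auto
qed

definition diag_unit :: "nat \<Rightarrow> nat \<Rightarrow> complex mat" where
  "diag_unit k y = diagm k (\<lambda>z. if z = y then 1 else 0)"

lemma diag_unit_carrier[simp]: "diag_unit k y \<in> carrier_mat k k" by (simp add: diag_unit_def)

lemma psd_diag_unit: assumes "y < k" shows "psd k (diag_unit k y)"
  unfolding psd_quad_form
proof (intro conjI ballI)
  fix v :: "complex vec" assume v: "v \<in> carrier_vec k"
  have "quad_form k (diag_unit k y) v = (\<Sum>i<k. \<Sum>j<k. if i = y \<and> j = y then cnj (v $ i) * v $ j else 0)"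
    unfolding quad_form_def diag_unit_def by (intro sum.cong refl) auto
  also have "\<dots> = cnj (v $ y) * v $ y"
  proof -
    have "(\<Sum>i<k. \<Sum>j<k. if i = y \<and> j = y then cnj (v $ i) * v $ j else 0) = (\<Sum>i<k. if i = y then cnj (v $ i) * v $ y else 0)"
      using assms by (intro sum.cong refl) (auto simp: if_distrib cong: if_cong)
    thus ?thesis using assms by simp
  qed
  finally have e: "quad_form k (diag_unit k y) v = cnj (v $ y) * v $ y" .
  show "Im (quad_form k (diag_unit k y) v) = 0" unfolding e by simp
  show "Re (quad_form k (diag_unit k y) v) \<ge> 0" unfolding e by simp
qed simp

lemma lin_carrier: "lin_map n m f \<Longrightarrow> f X \<in> carrier_mat m m"
  unfolding lin_map_def by (cases "X \<in> carrier_mat n n") auto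

lemma lin_dim: "lin_map n m f \<Longrightarrow> dim_row (f X) = m" "lin_map n m f \<Longrightarrow> dim_col (f X) = m"
  using lin_carrier[of n m f X] by auto

lemma lin_smult: "lin_map n m f \<Longrightarrow> X \<in> carrier_mat n n \<Longrightarrow> f (c \<cdot>\<^sub>m X) = c \<cdot>\<^sub>m f X"
  unfolding lin_map_def by auto

lemma lin_add: "lin_map n m f \<Longrightarrow> X \<in> carrier_mat n n \<Longrightarrow> Y \<in> carrier_mat n n \<Longrightarrow> f (X + Y) = f X + f Y"
  unfolding lin_map_def by auto

lemma lin_out: "lin_map n m f \<Longrightarrow> X \<notin> carrier_mat n n \<Longrightarrow> f X = 0\<^sub>m m m"
  unfolding lin_map_def by auto

lemma lin_zero: assumes "lin_map n m f" shows "f (0\<^sub>m n n) = 0\<^sub>m m m"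
proof -
  have c: "f (0\<^sub>m n n) \<in> carrier_mat m m" using assms by (simp add: lin_map_def)
  have "f (0\<^sub>m n n) = f (0 \<cdot>\<^sub>m 0\<^sub>m n n)" by (simp add: smult_zero_mat)
  also have "\<dots> = 0 \<cdot>\<^sub>m f (0\<^sub>m n n)" by (rule lin_smult[OF assms]) simp
  also have "\<dots> = 0\<^sub>m m m" using c by (simp add: smult_zero_mat)
  finally show ?thesis .
qed

lemma lin_map_comp: assumes f: "lin_map n m f" and g: "lin_map m k g" shows "lin_map n k (g \<circ> f)"
  unfolding lin_map_def
proof (intro conjI allI impI ballI)
  fix X :: "complex mat" assume "X \<notin> carrier_mat n n"
  thus "(g \<circ> f) X = 0\<^sub>m k k" using lin_out[OF f] lin_zero[OF g] by simp
next
  fix X Y :: "complex mat" assume X: "X \<in> carrier_mat n n" and Y: "Y \<in> carrier_mat n n"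
  show "(g \<circ> f) (X + Y) = (g \<circ> f) X + (g \<circ> f) Y"
    using lin_add[OF f X Y] lin_add[OF g lin_carrier[OF f, of X] lin_carrier[OF f, of Y]] by simp
next
  fix c and X :: "complex mat" assume X: "X \<in> carrier_mat n n"
  show "(g \<circ> f) (c \<cdot>\<^sub>m X) = c \<cdot>\<^sub>m (g \<circ> f) X"
    using lin_smult[OF f X] lin_smult[OF g lin_carrier[OF f, of X]] by simp
qed (use f g lin_carrier[OF g] in \<open>auto simp: lin_map_def\<close>)

lemma lin_diag_expand:
  assumes L: "lin_map k' k Lam" and y: "y < k"
  shows "Lam (diagm k' w) $$ (y,y) = (\<Sum>y'<k'. complex_of_real (w y') * Lam (diag_unit k' y') $$ (y,y))"
proof -
  have "K \<le> k' \<Longrightarrow> Lam (diagm k' (\<lambda>z. if z < K then w z else 0)) $$ (y,y) = (\<Sum>y'<K. complex_of_real (w y') * Lam (diag_unit k' y') $$ (y,y))" for K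
  proof (induct K)
    case 0
    have "diagm k' (\<lambda>z. if z < 0 then w z else 0) = 0\<^sub>m k' k'" by (rule eq_matI) auto
    thus ?case using lin_zero[OF L] y by simp
  next
    case (Suc K)
    have "diagm k' (\<lambda>z. if z < Suc K then w z else 0) = diagm k' (\<lambda>z. if z < K then w z else 0) + complex_of_real (w K) \<cdot>\<^sub>m diag_unit k' K"
      by (rule eq_matI) (auto simp: diag_unit_def less_Suc_eq)
    hence "Lam (diagm k' (\<lambda>z. if z < Suc K then w z else 0)) = Lam (diagm k' (\<lambda>z. if z < K then w z else 0)) + complex_of_real (w K) \<cdot>\<^sub>m Lam (diag_unit k' K)"
      by (simp add: lin_add[OF L] lin_smult[OF L])
    thus ?case using Suc y by (simp add: lin_dim[OF L])
  qed
  from this[of k'] have "Lam (diagm k' (\<lambda>z. if z < k' then w z else 0)) $$ (y,y) = (\<Sum>y'<k'. complex_of_real (w y') * Lam (diag_unit k' y') $$ (y,y))" by simp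
  moreover have "diagm k' (\<lambda>z. if z < k' then w z else 0) = diagm k' w" by (rule eq_matI) auto
  ultimately show ?thesis by simp
qed

lemma blk_carrier[simp]: "blk n d X a b \<in> carrier_mat n n"
  by (simp add: blk_def)

lemma dim_blk[simp]: "dim_row (blk n d X a b) = n" "dim_col (blk n d X a b) = n"
  by (simp_all add: blk_def)

lemma index_blk[simp]: "i < n \<Longrightarrow> j < n \<Longrightarrow> blk n d X a b $$ (i,j) = X $$ (i*d+a, j*d+b)"
  by (simp add: blk_def)

lemma tensor_id_in: "X \<in> carrier_mat (n*d) (n*d) \<Longrightarrow>
   tensor_id n m d f X = mat (m * d) (m * d) (\<lambda>(r, s). f (blk n d X (r mod d) (s mod d)) $$ (r div d, s div d))"
  by (simp add: tensor_id_def)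

lemma tensor_id_carrier: "tensor_id n m d f X \<in> carrier_mat (m*d) (m*d)"
  by (cases "X \<in> carrier_mat (n*d) (n*d)") (auto simp: tensor_id_def restr_def)

lemma dim_tensor_id[simp]: "dim_row (tensor_id n m d f X) = m*d" "dim_col (tensor_id n m d f X) = m*d"
  using tensor_id_carrier[of n m d f X] by auto

lemma tensor_entry: "X \<in> carrier_mat (n*d) (n*d) \<Longrightarrow> i < m \<Longrightarrow> j < m \<Longrightarrow> a < d \<Longrightarrow> b < d \<Longrightarrow>
  tensor_id n m d f X $$ (i*d+a, j*d+b) = f (blk n d X a b) $$ (i,j)"
  by (simp add: tensor_id_in block_idx_lt)

lemma blk_tensor:
  assumes f: "lin_map n m f" and X: "X \<in> carrier_mat (n*d) (n*d)" and ab: "a < d" "b < d"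
  shows "blk m d (tensor_id n m d f X) a b = f (blk n d X a b)"
proof -
  have fc: "f (blk n d X a b) \<in> carrier_mat m m" by (rule lin_carrier[OF f])
  show ?thesis
  proof (rule eq_matI)
  fix i j assume "i < dim_row (f (blk n d X a b))" "j < dim_col (f (blk n d X a b))"
  hence ij: "i < m" "j < m" using fc by auto
  have lt: "i*d+a < m*d" "j*d+b < m*d"
    using block_idx_lt[OF ij(1) ab(1)] block_idx_lt[OF ij(2) ab(2)] by auto
  have dm: "(i*d+a) div d = i" "(i*d+a) mod d = a" "(j*d+b) div d = j" "(j*d+b) mod d = b" using ab by auto
  have "blk m d (tensor_id n m d f X) a b $$ (i,j) = tensor_id n m d f X $$ (i*d+a, j*d+b)"
    using ij by simp
  also have "\<dots> = f (blk n d X ((i*d+a) mod d) ((j*d+b) mod d)) $$ ((i*d+a) div d, (j*d+b) div d)"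
    unfolding tensor_id_in[OF X] using lt by (subst index_mat) auto
  finally show "blk m d (tensor_id n m d f X) a b $$ (i,j) = f (blk n d X a b) $$ (i,j)"
    unfolding dm .
  qed (use fc in auto)
qed

(* (f (x) I_d)(0) = 0, needed because maps are normalised outside their domain. *)
lemma tensor_zero:
  assumes g: "lin_map m k g"
  shows "tensor_id m k d g (0\<^sub>m (m*d) (m*d)) = 0\<^sub>m (k*d) (k*d)"
proof (rule eq_matI)
  fix r s assume "r < dim_row (0\<^sub>m (k * d) (k * d) :: complex mat)" "s < dim_col (0\<^sub>m (k * d) (k * d) :: complex mat)"
  moreover have "blk m d (0\<^sub>m (m*d) (m*d)) a b = 0\<^sub>m m m" if "a < d" "b < d" for a b
    by (rule eq_matI) (use that in \<open>auto simp: block_idx_lt\<close>)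
  ultimately show "tensor_id m k d g (0\<^sub>m (m*d) (m*d)) $$ (r,s) = 0\<^sub>m (k*d) (k*d) $$ (r,s)"
    by (simp add: tensor_id_in lin_zero[OF g] div_lt_mult mod_lt_mult)
qed (auto simp: tensor_id_def)

lemma tensor_comp:
  assumes f: "lin_map n m f" and g: "lin_map m k g"
  shows "tensor_id n k d (g \<circ> f) = tensor_id m k d g \<circ> tensor_id n m d f"
proof (rule ext)
  fix X :: "complex mat"
  show "tensor_id n k d (g \<circ> f) X = (tensor_id m k d g \<circ> tensor_id n m d f) X"
  proof (cases "X \<in> carrier_mat (n*d) (n*d)")
    case False
    hence "tensor_id n m d f X = 0\<^sub>m (m*d) (m*d)" "tensor_id n k d (g \<circ> f) X = 0\<^sub>m (k*d) (k*d)"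
      by (simp_all add: tensor_id_def restr_out)
    thus ?thesis by (simp add: tensor_zero[OF g])
  next
    case X: True
    show ?thesis
    proof (rule eq_matI)
      fix r s assume "r < dim_row ((tensor_id m k d g \<circ> tensor_id n m d f) X)"
        "s < dim_col ((tensor_id m k d g \<circ> tensor_id n m d f) X)"
      hence rs: "r < k*d" "s < k*d" by auto
      hence md: "r mod d < d" "s mod d < d" by (auto simp: mod_lt_mult)
      have TX: "tensor_id n m d f X \<in> carrier_mat (m*d) (m*d)" by (rule tensor_id_carrier)
      have "(tensor_id m k d g \<circ> tensor_id n m d f) X $$ (r,s)
          = g (blk m d (tensor_id n m d f X) (r mod d) (s mod d)) $$ (r div d, s div d)"
        using rs by (simp add: tensor_id_in[OF TX])
      also have "\<dots> = g (f (blk n d X (r mod d) (s mod d))) $$ (r div d, s div d)"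
        by (simp add: blk_tensor[OF f X md])
      also have "\<dots> = tensor_id n k d (g \<circ> f) X $$ (r,s)"
        using rs by (simp add: tensor_id_in[OF X])
      finally show "tensor_id n k d (g \<circ> f) X $$ (r,s) = (tensor_id m k d g \<circ> tensor_id n m d f) X $$ (r,s)"
        by simp
    qed simp_all
  qed
qed

lemma tensor_one: assumes f: "lin_map n m f" and X: "X \<in> carrier_mat n n" shows "tensor_id n m 1 f X = f X"
proof (rule eq_matI)
  have b: "blk n 1 X 0 0 = X" using X by (intro eq_matI) auto
  fix i j assume "i < dim_row (f X)" "j < dim_col (f X)"
  thus "tensor_id n m 1 f X $$ (i,j) = f X $$ (i,j)" using X b lin_carrier[OF f, of X] by (simp add: tensor_id_in)
qed (use X lin_carrier[OF f, of X] in \<open>auto simp: tensor_id_in\<close>)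

lemma blk_blk:
  assumes "a < d" "b < d"
  shows "blk n d (blk (n*d) e X c c') a b = blk n (d*e) X (a*e + c) (b*e + c')"
proof (rule eq_matI)
  fix i j assume "i < dim_row (blk n (d*e) X (a*e + c) (b*e + c'))" "j < dim_col (blk n (d*e) X (a*e + c) (b*e + c'))"
  hence ij: "i < n" "j < n" by auto
  have "i*d+a < n*d" "j*d+b < n*d" using block_idx_lt[OF ij(1) assms(1)] block_idx_lt[OF ij(2) assms(2)] by auto
  thus "blk n d (blk (n*d) e X c c') a b $$ (i,j) = blk n (d*e) X (a*e + c) (b*e + c') $$ (i,j)"
    using ij by (simp add: algebra_simps)
qed auto

lemma tensor_tensor:
  assumes f: "lin_map n m f"
  shows "tensor_id (n*d) (m*d) e (tensor_id n m d f) = tensor_id n m (d*e) f"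
proof (rule ext)
  fix X :: "complex mat"
  show "tensor_id (n*d) (m*d) e (tensor_id n m d f) X = tensor_id n m (d*e) f X"
  proof (cases "X \<in> carrier_mat (n*d*e) (n*d*e)")
    case False
    hence "X \<notin> carrier_mat (n*(d*e)) (n*(d*e))" by (simp add: mult.assoc)
    thus ?thesis using False by (simp add: tensor_id_def restr_out mult.assoc)
  next
    case X: True
    have X': "X \<in> carrier_mat (n*(d*e)) (n*(d*e))" using X by (simp add: mult.assoc)
    show ?thesis
    proof (rule eq_matI)
      fix r s assume "r < dim_row (tensor_id n m (d*e) f X)" "s < dim_col (tensor_id n m (d*e) f X)"
      hence rs: "r < m*(d*e)" "s < m*(d*e)" by auto
      hence rs': "r < m*d*e" "s < m*d*e" by (simp_all add: mult.assoc)
      have re: "r mod e < e" "s mod e < e" "r div e < m*d" "s div e < m*d" using rs' by (auto simp: mod_lt_mult div_lt_mult)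
      have rd: "r div e mod d < d" "s div e mod d < d" using re by (auto simp: mod_lt_mult)
      have B: "blk (n*d) e X (r mod e) (s mod e) \<in> carrier_mat (n*d) (n*d)" by simp
      have "tensor_id (n*d) (m*d) e (tensor_id n m d f) X $$ (r,s)
          = tensor_id n m d f (blk (n*d) e X (r mod e) (s mod e)) $$ (r div e, s div e)"
        using rs' by (simp add: tensor_id_in[OF X])
      also have "\<dots> = f (blk n d (blk (n*d) e X (r mod e) (s mod e)) (r div e mod d) (s div e mod d)) $$ (r div e div d, s div e div d)"
        using re by (simp add: tensor_id_in[OF B])
      also have "\<dots> = f (blk n (d*e) X (r div e mod d * e + r mod e) (s div e mod d * e + s mod e)) $$ (r div e div d, s div e div d)"
        by (simp add: blk_blk[OF rd])
      also have "\<dots> = f (blk n (d*e) X (r mod (d*e)) (s mod (d*e))) $$ (r div (d*e), s div (d*e))"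
        by (simp add: mult.commute[of d e] div_mult2_eq mod_mult2_eq mult.commute[of e "r div e mod d"] mult.commute[of e "s div e mod d"])
      also have "\<dots> = tensor_id n m (d*e) f X $$ (r,s)"
        using rs by (simp add: tensor_id_in[OF X'])
      finally show "tensor_id (n*d) (m*d) e (tensor_id n m d f) X $$ (r,s) = tensor_id n m (d*e) f X $$ (r,s)" .
    qed (simp_all add: mult.assoc)
  qed
qed

lemma trace_tensor:
  assumes f: "lin_map n m f" and X: "X \<in> carrier_mat (n*d) (n*d)"
  shows "mtrace (tensor_id n m d f X) = (\<Sum>a<d. mtrace (f (blk n d X a a)))"
proof -
  have "mtrace (tensor_id n m d f X) = (\<Sum>r<m*d. tensor_id n m d f X $$ (r,r))" by (simp add: mtrace_def)
  also have "\<dots> = (\<Sum>i<m. \<Sum>a<d. tensor_id n m d f X $$ (i*d+a,i*d+a))" by (rule sum_split_mult)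
  also have "\<dots> = (\<Sum>i<m. \<Sum>a<d. f (blk n d X a a) $$ (i,i))" by (simp add: tensor_entry[OF X])
  also have "\<dots> = (\<Sum>a<d. \<Sum>i<m. f (blk n d X a a) $$ (i,i))" by (rule sum.swap)
  also have "\<dots> = (\<Sum>a<d. mtrace (f (blk n d X a a)))"
    by (simp add: mtrace_def lin_dim[OF f])
  finally show ?thesis .
qed

lemma trace_blk:
  assumes X: "X \<in> carrier_mat (n*d) (n*d)"
  shows "mtrace X = (\<Sum>a<d. mtrace (blk n d X a a))"
proof -
  have "mtrace X = (\<Sum>r<n*d. X $$ (r,r))" using X by (simp add: mtrace_def)
  also have "\<dots> = (\<Sum>i<n. \<Sum>a<d. X $$ (i*d+a,i*d+a))" by (rule sum_split_mult)
  also have "\<dots> = (\<Sum>a<d. \<Sum>i<n. X $$ (i*d+a,i*d+a))" by (rule sum.swap)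
  also have "\<dots> = (\<Sum>a<d. mtrace (blk n d X a a))" by (simp add: mtrace_def)
  finally show ?thesis .
qed

lemma blk_add: assumes X: "X \<in> carrier_mat (n*d) (n*d)" and Y: "Y \<in> carrier_mat (n*d) (n*d)" and ab: "a < d" "b < d"
  shows "blk n d (X + Y) a b = blk n d X a b + blk n d Y a b"
proof (rule eq_matI)
  fix i j assume "i < dim_row (blk n d X a b + blk n d Y a b)" "j < dim_col (blk n d X a b + blk n d Y a b)"
  hence ij: "i < n" "j < n" by simp_all
  have l: "i*d+a < n*d" "j*d+b < n*d" using block_idx_lt[OF ij(1) ab(1)] block_idx_lt[OF ij(2) ab(2)] by auto
  show "blk n d (X + Y) a b $$ (i,j) = (blk n d X a b + blk n d Y a b) $$ (i,j)"
    using ij l X Y by simp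
qed simp_all

lemma blk_smult: assumes X: "X \<in> carrier_mat (n*d) (n*d)" and ab: "a < d" "b < d"
  shows "blk n d (c \<cdot>\<^sub>m X) a b = c \<cdot>\<^sub>m blk n d X a b"
proof (rule eq_matI)
  fix i j assume "i < dim_row (c \<cdot>\<^sub>m blk n d X a b)" "j < dim_col (c \<cdot>\<^sub>m blk n d X a b)"
  hence ij: "i < n" "j < n" by simp_all
  have l: "i*d+a < n*d" "j*d+b < n*d" using block_idx_lt[OF ij(1) ab(1)] block_idx_lt[OF ij(2) ab(2)] by auto
  show "blk n d (c \<cdot>\<^sub>m X) a b $$ (i,j) = (c \<cdot>\<^sub>m blk n d X a b) $$ (i,j)"
    using ij l X by simp
qed simp_all

lemma blk_adj: assumes X: "X \<in> carrier_mat (n*d) (n*d)" and ab: "a < d" "b < d"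
  shows "blk n d (adj X) a b = adj (blk n d X b a)"
proof (rule eq_matI)
  fix i j assume "i < dim_row (adj (blk n d X b a))" "j < dim_col (adj (blk n d X b a))"
  hence ij: "i < n" "j < n" by simp_all
  have l: "i*d+a < n*d" "j*d+b < n*d" using block_idx_lt[OF ij(1) ab(1)] block_idx_lt[OF ij(2) ab(2)] by auto
  show "blk n d (adj X) a b $$ (i,j) = adj (blk n d X b a) $$ (i,j)"
    using ij l X by simp
qed simp_all

lemma blk_kron: assumes X: "X \<in> carrier_mat n n" and B: "B \<in> carrier_mat k k" and ab: "a < k" "b < k"
  shows "blk n k (kron X B) a b = B $$ (a,b) \<cdot>\<^sub>m X"
proof (rule eq_matI)
  fix i j assume "i < dim_row (B $$ (a,b) \<cdot>\<^sub>m X)" "j < dim_col (B $$ (a,b) \<cdot>\<^sub>m X)"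
  hence ij: "i < n" "j < n" using X by auto
  have l: "i*k+a < n*k" "j*k+b < n*k" using block_idx_lt[OF ij(1) ab(1)] block_idx_lt[OF ij(2) ab(2)] by auto
  show "blk n k (kron X B) a b $$ (i,j) = (B $$ (a,b) \<cdot>\<^sub>m X) $$ (i,j)"
    using ij l X B ab by (simp add: index_kron)
qed (use X in auto)

lemma tensor_kron: assumes f: "lin_map n m f" and X: "X \<in> carrier_mat n n" and B: "B \<in> carrier_mat k k"
  shows "tensor_id n m k f (kron X B) = kron (f X) B"
proof -
  have KC: "kron X B \<in> carrier_mat (n*k) (n*k)" by (rule kron_carrier[OF X B])
  show ?thesis
  proof (rule eq_matI)
    fix r s assume "r < dim_row (kron (f X) B)" "s < dim_col (kron (f X) B)"
    hence rs: "r < m*k" "s < m*k" using B by (auto simp: lin_dim[OF f])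
    have d: "r div k < m" "s div k < m" "r mod k < k" "s mod k < k" using rs by (auto simp: div_lt_mult mod_lt_mult)
    have "tensor_id n m k f (kron X B) $$ (r,s) = f (blk n k (kron X B) (r mod k) (s mod k)) $$ (r div k, s div k)"
      using rs by (simp add: tensor_id_in[OF KC])
    also have "\<dots> = B $$ (r mod k, s mod k) * f X $$ (r div k, s div k)"
      using d by (simp add: blk_kron[OF X B] lin_smult[OF f X] lin_dim[OF f])
    also have "\<dots> = kron (f X) B $$ (r,s)" using rs B by (simp add: index_kron lin_dim[OF f])
    finally show "tensor_id n m k f (kron X B) $$ (r,s) = kron (f X) B $$ (r,s)" .
  qed (use B in \<open>simp_all add: lin_dim[OF f]\<close>)
qed

lemma lin_map_tensor:
  assumes f: "lin_map n m f" and d: "1 \<le> d"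
  shows "lin_map (n*d) (m*d) (tensor_id n m d f)"
  unfolding lin_map_def
proof (intro conjI allI impI ballI)
  show "1 \<le> n*d" "1 \<le> m*d" using f d by (auto simp: lin_map_def)
next
  fix X :: "complex mat" assume "X \<notin> carrier_mat (n*d) (n*d)"
  thus "tensor_id n m d f X = 0\<^sub>m (m*d) (m*d)" by (simp add: tensor_id_def restr_out)
next
  fix X :: "complex mat" show "tensor_id n m d f X \<in> carrier_mat (m*d) (m*d)" by (rule tensor_id_carrier)
next
  fix X Y :: "complex mat" assume X: "X \<in> carrier_mat (n*d) (n*d)" and Y: "Y \<in> carrier_mat (n*d) (n*d)"
  have XY: "X + Y \<in> carrier_mat (n*d) (n*d)" using X Y by simp
  show "tensor_id n m d f (X + Y) = tensor_id n m d f X + tensor_id n m d f Y"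
  proof (rule eq_matI)
    fix r s assume "r < dim_row (tensor_id n m d f X + tensor_id n m d f Y)" "s < dim_col (tensor_id n m d f X + tensor_id n m d f Y)"
    hence rs: "r < m*d" "s < m*d" by auto
    hence md: "r mod d < d" "s mod d < d" "r div d < m" "s div d < m" by (auto simp: mod_lt_mult div_lt_mult)
    show "tensor_id n m d f (X + Y) $$ (r,s) = (tensor_id n m d f X + tensor_id n m d f Y) $$ (r,s)"
      using rs md
      by (simp add: tensor_id_in[OF XY] tensor_id_in[OF X] tensor_id_in[OF Y] blk_add[OF X Y] lin_add[OF f] lin_dim[OF f])
  qed simp_all
next
  fix c and X :: "complex mat" assume X: "X \<in> carrier_mat (n*d) (n*d)"
  have cX: "c \<cdot>\<^sub>m X \<in> carrier_mat (n*d) (n*d)" using X by simp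
  show "tensor_id n m d f (c \<cdot>\<^sub>m X) = c \<cdot>\<^sub>m tensor_id n m d f X"
  proof (rule eq_matI)
    fix r s assume "r < dim_row (c \<cdot>\<^sub>m tensor_id n m d f X)" "s < dim_col (c \<cdot>\<^sub>m tensor_id n m d f X)"
    hence rs: "r < m*d" "s < m*d" by auto
    hence md: "r mod d < d" "s mod d < d" "r div d < m" "s div d < m" by (auto simp: mod_lt_mult div_lt_mult)
    show "tensor_id n m d f (c \<cdot>\<^sub>m X) $$ (r,s) = (c \<cdot>\<^sub>m tensor_id n m d f X) $$ (r,s)"
      using rs md
      by (simp add: tensor_id_in[OF cX] tensor_id_in[OF X] blk_smult[OF X] lin_smult[OF f] lin_dim[OF f])
  qed simp_all
qed

lemma channel_comp: assumes f: "channel n m f" and g: "channel m k g" shows "channel n k (g \<circ> f)"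
proof -
  have lf: "lin_map n m f" and lg: "lin_map m k g" using f g by (auto simp: channel_def)
  show ?thesis unfolding channel_def
  proof (intro conjI allI impI ballI)
    show "lin_map n k (g \<circ> f)" by (rule lin_map_comp[OF lf lg])
  next
    fix X :: "complex mat" assume X: "X \<in> carrier_mat n n"
    show "mtrace ((g \<circ> f) X) = mtrace X"
      using f g X lin_carrier[OF lf, of X] by (simp add: channel_def)
  next
    fix d :: nat and X assume d: "1 \<le> d" and X: "psd (n*d) X"
    have "psd (m*d) (tensor_id n m d f X)" using f d X by (simp add: channel_def)
    hence "psd (k*d) (tensor_id m k d g (tensor_id n m d f X))" using g d by (simp add: channel_def)
    thus "psd (k*d) (tensor_id n k d (g \<circ> f) X)" by (simp add: tensor_comp[OF lf lg])
  qed
qed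

lemma channel_tensor:
  assumes f: "channel n m f" and d: "1 \<le> d"
  shows "channel (n*d) (m*d) (tensor_id n m d f)"
proof -
  have lf: "lin_map n m f" using f by (simp add: channel_def)
  show ?thesis unfolding channel_def
  proof (intro conjI allI impI ballI)
    show "lin_map (n*d) (m*d) (tensor_id n m d f)" by (rule lin_map_tensor[OF lf d])
  next
    fix X :: "complex mat" assume X: "X \<in> carrier_mat (n*d) (n*d)"
    have "mtrace (tensor_id n m d f X) = (\<Sum>a<d. mtrace (f (blk n d X a a)))" by (rule trace_tensor[OF lf X])
    also have "\<dots> = (\<Sum>a<d. mtrace (blk n d X a a))" using f by (simp add: channel_def)
    also have "\<dots> = mtrace X" by (rule trace_blk[OF X, symmetric])
    finally show "mtrace (tensor_id n m d f X) = mtrace X" .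
  next
    fix e :: nat and X assume e: "1 \<le> e" and X: "psd (n*d*e) X"
    have "psd (m*(d*e)) (tensor_id n m (d*e) f X)"
      using f X d e by (simp add: channel_def mult.assoc)
    thus "psd (m*d*e) (tensor_id (n*d) (m*d) e (tensor_id n m d f) X)"
      by (simp add: tensor_tensor[OF lf] mult.assoc)
  qed
qed

lemma tangent_tensor:
  assumes D: "tangent n m D" and d: "1 \<le> d"
  shows "tangent (n*d) (m*d) (tensor_id n m d D)"
proof -
  have lD: "lin_map n m D" using D by (simp add: tangent_def)
  show ?thesis unfolding tangent_def
  proof (intro conjI ballI)
    show "lin_map (n*d) (m*d) (tensor_id n m d D)" by (rule lin_map_tensor[OF lD d])
  next
    fix X :: "complex mat" assume X: "X \<in> carrier_mat (n*d) (n*d)"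
    have aX: "adj X \<in> carrier_mat (n*d) (n*d)" using X by simp
    show "tensor_id n m d D (adj X) = adj (tensor_id n m d D X)"
    proof (rule eq_matI)
      fix r s assume "r < dim_row (adj (tensor_id n m d D X))" "s < dim_col (adj (tensor_id n m d D X))"
      hence rs: "r < m*d" "s < m*d" by auto
      hence md: "r mod d < d" "s mod d < d" "r div d < m" "s div d < m" by (auto simp: mod_lt_mult div_lt_mult)
      have "D (adj (blk n d X (s mod d) (r mod d))) = adj (D (blk n d X (s mod d) (r mod d)))"
        using D by (simp add: tangent_def)
      thus "tensor_id n m d D (adj X) $$ (r,s) = adj (tensor_id n m d D X) $$ (r,s)"
        using rs md
        by (simp add: tensor_id_in[OF aX] tensor_id_in[OF X] blk_adj[OF X] lin_dim[OF lD])
    qed simp_all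
  next
    fix X :: "complex mat" assume X: "X \<in> carrier_mat (n*d) (n*d)"
    show "mtrace (tensor_id n m d D X) = 0"
      using D by (simp add: trace_tensor[OF lD X] tangent_def)
  qed
qed

lemma channel_psd: assumes f: "channel n m f" and X: "psd n X" shows "psd m (f X)"
proof -
  have lf: "lin_map n m f" using f by (simp add: channel_def)
  have XC: "X \<in> carrier_mat n n" using X by (simp add: psd_quad_form)
  have "\<forall>d\<ge>1. \<forall>X. psd (n * d) X \<longrightarrow> psd (m * d) (tensor_id n m d f X)" using f by (simp add: channel_def)
  hence "psd (m*1) (tensor_id n m 1 f X)" using X by auto
  thus ?thesis unfolding tensor_one[OF lf XC] by simp
qed

definition kraus_map :: "nat \<Rightarrow> nat \<Rightarrow> (nat \<Rightarrow> complex mat) \<Rightarrow> nat \<Rightarrow> smap" where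
  "kraus_map n m M N = restr n m (\<lambda>X. mat m m (\<lambda>(i,j). \<Sum>a<N. \<Sum>k<n. \<Sum>l<n. M a $$ (i,k) * X $$ (k,l) * cnj (M a $$ (j,l))))"

lemma kraus_map_in: "X \<in> carrier_mat n n \<Longrightarrow> kraus_map n m M N X = mat m m (\<lambda>(i,j). \<Sum>a<N. \<Sum>k<n. \<Sum>l<n. M a $$ (i,k) * X $$ (k,l) * cnj (M a $$ (j,l)))"
  by (simp add: kraus_map_def)

lemma kraus_map_carrier: "kraus_map n m M N X \<in> carrier_mat m m"
  by (cases "X \<in> carrier_mat n n") (auto simp: kraus_map_def restr_def)

lemma dim_kraus_map[simp]: "dim_row (kraus_map n m M N X) = m" "dim_col (kraus_map n m M N X) = m"
  using kraus_map_carrier[of n m M N X] by auto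

lemma lin_map_kraus_map: assumes "1 \<le> n" "1 \<le> m" shows "lin_map n m (kraus_map n m M N)"
  unfolding lin_map_def
proof (intro conjI allI impI ballI)
  fix X :: "complex mat" assume "X \<notin> carrier_mat n n" thus "kraus_map n m M N X = 0\<^sub>m m m" by (simp add: kraus_map_def restr_out)
next
  fix X Y :: "complex mat" assume X: "X \<in> carrier_mat n n" and Y: "Y \<in> carrier_mat n n"
  show "kraus_map n m M N (X + Y) = kraus_map n m M N X + kraus_map n m M N Y"
    using X Y by (auto simp: kraus_map_in ring_distribs sum.distrib intro!: eq_matI)
next
  fix c and X :: "complex mat" assume X: "X \<in> carrier_mat n n"
  show "kraus_map n m M N (c \<cdot>\<^sub>m X) = c \<cdot>\<^sub>m kraus_map n m M N X"
    using X by (auto simp: kraus_map_in sum_distrib_left mult.assoc mult.left_commute intro!: eq_matI)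
qed (use assms in \<open>auto simp: kraus_map_carrier\<close>)

lemma quad_form_kraus_map:
  assumes X: "X \<in> carrier_mat n n"
  shows "quad_form m (kraus_map n m M N X) v = (\<Sum>a<N. quad_form n X (vec n (\<lambda>k. \<Sum>j<m. cnj (M a $$ (j,k)) * v $ j)))"
proof -
  have "quad_form m (kraus_map n m M N X) v = (\<Sum>i<m. \<Sum>j<m. \<Sum>a<N. \<Sum>k<n. \<Sum>l<n.
           cnj (v $ i) * M a $$ (i,k) * X $$ (k,l) * cnj (M a $$ (j,l)) * v $ j)"
    using X by (simp add: quad_form_def kraus_map_in sum_distrib_left sum_distrib_right mult.assoc)
  also have "\<dots> = (\<Sum>a<N. \<Sum>k<n. \<Sum>l<n. \<Sum>i<m. \<Sum>j<m.
           cnj (v $ i) * M a $$ (i,k) * X $$ (k,l) * cnj (M a $$ (j,l)) * v $ j)"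
    by (rule sum_rotate5)
  also have "\<dots> = (\<Sum>a<N. quad_form n X (vec n (\<lambda>k. \<Sum>j<m. cnj (M a $$ (j,k)) * v $ j)))"
    by (simp add: quad_form_def sum_distrib_left sum_distrib_right mult.assoc mult.left_commute mult.commute)
  finally show ?thesis .
qed

lemma psd_kraus_map: assumes "psd n X" shows "psd m (kraus_map n m M N X)"
proof -
  have X: "X \<in> carrier_mat n n" using assms by (simp add: psd_quad_form)
  show ?thesis unfolding psd_quad_form
  proof (intro conjI ballI)
    fix v :: "complex vec" assume "v \<in> carrier_vec m"
    have h: "\<And>a. Im (quad_form n X (vec n (\<lambda>k. \<Sum>j<m. cnj (M a $$ (j,k)) * v $ j))) = 0 \<and>
                  Re (quad_form n X (vec n (\<lambda>k. \<Sum>j<m. cnj (M a $$ (j,k)) * v $ j))) \<ge> 0"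
      using assms unfolding psd_quad_form by auto
    show "Im (quad_form m (kraus_map n m M N X) v) = 0" using h by (simp add: quad_form_kraus_map[OF X] Im_sum)
    show "Re (quad_form m (kraus_map n m M N X) v) \<ge> 0" using h by (simp add: quad_form_kraus_map[OF X] Re_sum sum_nonneg)
  qed (rule kraus_map_carrier)
qed

definition kraus_op_tensor :: "nat \<Rightarrow> nat \<Rightarrow> nat \<Rightarrow> complex mat \<Rightarrow> complex mat" where
  "kraus_op_tensor n m d A = mat (m*d) (n*d) (\<lambda>(r,u). if r mod d = u mod d then A $$ (r div d, u div d) else 0)"

lemma tensor_kraus_map: "tensor_id n m d (kraus_map n m M N) = kraus_map (n*d) (m*d) (\<lambda>a. kraus_op_tensor n m d (M a)) N"
proof (rule ext)
  fix X :: "complex mat"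
  show "tensor_id n m d (kraus_map n m M N) X = kraus_map (n*d) (m*d) (\<lambda>a. kraus_op_tensor n m d (M a)) N X"
  proof (cases "X \<in> carrier_mat (n*d) (n*d)")
    case False thus ?thesis by (simp add: tensor_id_def kraus_map_def restr_out)
  next
    case X: True
    show ?thesis
    proof (rule eq_matI)
      fix r s assume r: "r < dim_row (kraus_map (n*d) (m*d) (\<lambda>a. kraus_op_tensor n m d (M a)) N X)"
        and s: "s < dim_col (kraus_map (n*d) (m*d) (\<lambda>a. kraus_op_tensor n m d (M a)) N X)"
      have r: "r < m*d" and s: "s < m*d" using r s X by (auto simp: kraus_map_in)
      have rd: "r div d < m" "r mod d < d" "s div d < m" "s mod d < d"
        using r s by (auto simp: div_lt_mult mod_lt_mult)
      have "kraus_map (n*d) (m*d) (\<lambda>a. kraus_op_tensor n m d (M a)) N X $$ (r,s) =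
         (\<Sum>a<N. \<Sum>u<n*d. \<Sum>w<n*d. kraus_op_tensor n m d (M a) $$ (r,u) * X $$ (u,w) * cnj (kraus_op_tensor n m d (M a) $$ (s,w)))"
        using X r s by (simp add: kraus_map_in)
      also have "\<dots> = (\<Sum>a<N. \<Sum>u<n*d. if r mod d = u mod d then (\<Sum>w<n*d. if s mod d = w mod d then
              M a $$ (r div d, u div d) * X $$ (u,w) * cnj (M a $$ (s div d, w div d)) else 0) else 0)"
        using r s by (auto simp: kraus_op_tensor_def intro!: sum.cong)
      also have "\<dots> = (\<Sum>a<N. \<Sum>k<n. \<Sum>l<n.
              M a $$ (r div d, k) * X $$ (k*d + r mod d, l*d + s mod d) * cnj (M a $$ (s div d, l)))"
        using rd by (simp add: sum_mod_sel)
      also have "\<dots> = tensor_id n m d (kraus_map n m M N) X $$ (r,s)"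
        using X r s rd by (simp add: tensor_id_in kraus_map_in)
      finally show "tensor_id n m d (kraus_map n m M N) X $$ (r,s) = kraus_map (n*d) (m*d) (\<lambda>a. kraus_op_tensor n m d (M a)) N X $$ (r,s)" by simp
    qed (use X in \<open>auto simp: kraus_map_in tensor_id_in\<close>)
  qed
qed

definition kraus_complete :: "nat \<Rightarrow> nat \<Rightarrow> (nat \<Rightarrow> complex mat) \<Rightarrow> nat \<Rightarrow> bool" where
  "kraus_complete n m M N \<longleftrightarrow> (\<forall>k<n. \<forall>l<n. (\<Sum>a<N. \<Sum>i<m. cnj (M a $$ (i,l)) * M a $$ (i,k)) = (if k = l then 1 else 0))"

lemma trace_kraus_map:
  assumes X: "X \<in> carrier_mat n n" and iso: "kraus_complete n m M N"
  shows "mtrace (kraus_map n m M N X) = mtrace X"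
proof -
  have "mtrace (kraus_map n m M N X) = (\<Sum>i<m. \<Sum>a<N. \<Sum>k<n. \<Sum>l<n. M a $$ (i,k) * X $$ (k,l) * cnj (M a $$ (i,l)))"
    using X by (simp add: mtrace_def kraus_map_in)
  also have "\<dots> = (\<Sum>a<N. \<Sum>i<m. \<Sum>k<n. \<Sum>l<n. M a $$ (i,k) * X $$ (k,l) * cnj (M a $$ (i,l)))"
    by (rule sum.swap)
  also have "\<dots> = (\<Sum>i<m. \<Sum>k<n. \<Sum>l<n. \<Sum>a<N. M a $$ (i,k) * X $$ (k,l) * cnj (M a $$ (i,l)))"
    by (rule sum_rotate4)
  also have "\<dots> = (\<Sum>k<n. \<Sum>l<n. \<Sum>a<N. \<Sum>i<m. M a $$ (i,k) * X $$ (k,l) * cnj (M a $$ (i,l)))"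
    by (rule sum_rotate4)
  also have "\<dots> = (\<Sum>k<n. \<Sum>l<n. X $$ (k,l) * (\<Sum>a<N. \<Sum>i<m. cnj (M a $$ (i,l)) * M a $$ (i,k)))"
    by (simp add: sum_distrib_left mult.commute mult.left_commute)
  also have "\<dots> = (\<Sum>k<n. X $$ (k,k))"
  proof (rule sum.cong[OF refl])
    fix k assume k: "k \<in> {..<n}"
    have "(\<Sum>l<n. X $$ (k,l) * (\<Sum>a<N. \<Sum>i<m. cnj (M a $$ (i,l)) * M a $$ (i,k))) =
          (\<Sum>l<n. if l = k then X $$ (k,l) else 0)"
      using iso k unfolding kraus_complete_def by (intro sum.cong) auto
    thus "(\<Sum>l<n. X $$ (k,l) * (\<Sum>a<N. \<Sum>i<m. cnj (M a $$ (i,l)) * M a $$ (i,k))) = X $$ (k,k)"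
      using k by simp
  qed
  also have "\<dots> = mtrace X" using X by (simp add: mtrace_def)
  finally show ?thesis .
qed

lemma channel_kraus_map:
  assumes "1 \<le> n" "1 \<le> m" "kraus_complete n m M N"
  shows "channel n m (kraus_map n m M N)"
  unfolding channel_def
proof (intro conjI allI impI ballI)
  show "lin_map n m (kraus_map n m M N)" using assms(1,2) by (rule lin_map_kraus_map)
next
  fix X :: "complex mat" assume "X \<in> carrier_mat n n"
  thus "mtrace (kraus_map n m M N X) = mtrace X" using assms(3) by (rule trace_kraus_map)
next
  fix d :: nat and X assume "1 \<le> d" "psd (n*d) X"
  thus "psd (m*d) (tensor_id n m d (kraus_map n m M N) X)" by (simp add: tensor_kraus_map psd_kraus_map)
qed

definition perm_channel :: "nat \<Rightarrow> (nat \<Rightarrow> nat) \<Rightarrow> smap" where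
  "perm_channel N \<sigma> = kraus_map N N (\<lambda>_. mat N N (\<lambda>(r,u). if u = \<sigma> r then 1 else 0)) 1"

lemma perm_channel_in:
  assumes X: "X \<in> carrier_mat N N" and s: "\<forall>r<N. \<sigma> r < N"
  shows "perm_channel N \<sigma> X = mat N N (\<lambda>(r,s). X $$ (\<sigma> r, \<sigma> s))"
proof (rule eq_matI)
  fix r t assume "r < dim_row (mat N N (\<lambda>(r,s). X $$ (\<sigma> r, \<sigma> s)))" "t < dim_col (mat N N (\<lambda>(r,s). X $$ (\<sigma> r, \<sigma> s)))"
  hence rt: "r < N" "t < N" by auto
  have "perm_channel N \<sigma> X $$ (r,t) = (\<Sum>k<N. \<Sum>l<N. (if k = \<sigma> r then 1 else 0) * X $$ (k,l) * cnj (if l = \<sigma> t then 1 else 0))"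
    using rt X by (simp add: perm_channel_def kraus_map_in)
  also have "\<dots> = X $$ (\<sigma> r, \<sigma> t)" using s rt by (simp add: sum_double_delta)
  finally show "perm_channel N \<sigma> X $$ (r,t) = mat N N (\<lambda>(r,s). X $$ (\<sigma> r, \<sigma> s)) $$ (r,t)" using rt by simp
qed (use X in \<open>auto simp: perm_channel_def kraus_map_in\<close>)

lemma channel_perm_channel:
  assumes N: "1 \<le> N" and s: "\<forall>r<N. \<sigma> r < N" and perm: "\<And>g::nat\<Rightarrow>complex. (\<Sum>r<N. g (\<sigma> r)) = (\<Sum>u<N. g u)"
  shows "channel N N (perm_channel N \<sigma>)"
  unfolding perm_channel_def
proof (rule channel_kraus_map[OF N N])
  show "kraus_complete N N (\<lambda>_. mat N N (\<lambda>(r,u). if u = \<sigma> r then 1 else 0)) 1"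
    unfolding kraus_complete_def
  proof (intro allI impI)
    fix k l assume kl: "k < N" "l < N"
    have "(\<Sum>a<(1::nat). \<Sum>i<N. cnj (mat N N (\<lambda>(r,u). if u = \<sigma> r then 1 else 0) $$ (i,l)) * mat N N (\<lambda>(r,u). if u = \<sigma> r then 1 else (0::complex)) $$ (i,k))
       = (\<Sum>i<N. (\<lambda>u. if l = u \<and> k = u then 1 else 0) (\<sigma> i))"
      using kl by (auto intro!: sum.cong)
    also have "\<dots> = (\<Sum>u<N. if l = u \<and> k = u then 1 else 0)" by (rule perm)
    also have "\<dots> = (if k = l then 1 else 0)"
    proof (cases "k = l")
      case False thus ?thesis by (simp, intro sum.neutral) auto
    qed (use kl in auto)
    finally show "(\<Sum>a<(1::nat). \<Sum>i<N. cnj (mat N N (\<lambda>(r,u). if u = \<sigma> r then 1 else 0) $$ (i,l)) * mat N N (\<lambda>(r,u). if u = \<sigma> r then 1 else (0::complex)) $$ (i,k))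
       = (if k = l then 1 else 0)" .
  qed
qed

(* The swap C^k (x) C^n -> C^n (x) C^k on indices. *)
definition swap_idx :: "nat \<Rightarrow> nat \<Rightarrow> nat \<Rightarrow> nat" where
  "swap_idx n k r = (r mod k) * n + r div k"

lemma swap_idx_lt: assumes "r < n*k" shows "swap_idx n k r < n*k"
proof -
  have "r mod k < k" "r div k < n" using assms by (auto simp: mod_lt_mult div_lt_mult)
  from block_idx_lt[OF this] show ?thesis unfolding swap_idx_def by (simp add: mult.commute)
qed

lemma swap_idx_sum: "(\<Sum>r<n*k. g (swap_idx n k r)) = (\<Sum>u<n*k. g u)"
proof -
  have "(\<Sum>r<n*k. g (swap_idx n k r)) = (\<Sum>i<n. \<Sum>y<k. g (swap_idx n k (i*k+y)))" by (rule sum_split_mult)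
  also have "\<dots> = (\<Sum>i<n. \<Sum>y<k. g (y*n+i))" by (intro sum.cong refl) (simp add: swap_idx_def)
  also have "\<dots> = (\<Sum>u<k*n. g u)" by (rule sum_swap_split[symmetric])
  finally show ?thesis by (simp add: mult.commute)
qed

lemma channel_swap: assumes "1 \<le> n" "1 \<le> k" shows "channel (k*n) (n*k) (perm_channel (n*k) (swap_idx n k))"
proof -
  have "channel (n*k) (n*k) (perm_channel (n*k) (swap_idx n k))"
    by (rule channel_perm_channel) (use assms swap_idx_lt swap_idx_sum in auto)
  thus ?thesis by (simp add: mult.commute)
qed

(* The reshuffling (C^n (x) C^d) (x) C^k -> (C^n (x) C^k) (x) C^d on indices, and its effect on
   blocks of Kronecker products. *)
definition shuffle_idx :: "nat \<Rightarrow> nat \<Rightarrow> nat \<Rightarrow> nat" where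
  "shuffle_idx k d r = ((r div d) div k * d + r mod d) * k + (r div d) mod k"

lemma shuffle_idx_lt: assumes "r < n*k*d" shows "shuffle_idx k d r < n*k*d"
proof -
  have a: "r div d < n*k" "r mod d < d" using assms by (auto simp: div_lt_mult mod_lt_mult)
  hence b: "r div d div k < n" "r div d mod k < k" by (auto simp: div_lt_mult mod_lt_mult)
  have "r div d div k * d + r mod d < n*d" using block_idx_lt[OF b(1) a(2)] .
  from block_idx_lt[OF this b(2)] show ?thesis unfolding shuffle_idx_def by (simp add: ac_simps)
qed

lemma shuffle_idx_sum: "(\<Sum>r<n*k*d. g (shuffle_idx k d r)) = (\<Sum>u<n*k*d. g u)"
proof -
  have "(\<Sum>r<n*k*d. g (shuffle_idx k d r)) = (\<Sum>v<n*k. \<Sum>a<d. g (shuffle_idx k d (v*d+a)))" by (rule sum_split_mult)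
  also have "\<dots> = (\<Sum>i<n. \<Sum>y<k. \<Sum>a<d. g (shuffle_idx k d ((i*k+y)*d+a)))" by (rule sum_split_mult)
  also have "\<dots> = (\<Sum>i<n. \<Sum>y<k. \<Sum>a<d. g ((i*d+a)*k+y))"
    by (intro sum.cong refl) (simp add: shuffle_idx_def)
  also have "\<dots> = (\<Sum>i<n. \<Sum>a<d. \<Sum>y<k. g ((i*d+a)*k+y))"
    by (rule sum.cong[OF refl], rule sum.swap)
  also have "\<dots> = (\<Sum>w<n*d. \<Sum>y<k. g (w*k+y))" by (rule sum_split_mult[symmetric])
  also have "\<dots> = (\<Sum>u<n*d*k. g u)" by (rule sum_split_mult[symmetric])
  finally show ?thesis by (simp add: ac_simps)
qed

lemma blk_shuffle_kron:
  assumes Y: "Y \<in> carrier_mat (n*d) (n*d)" and B: "B \<in> carrier_mat k k" and ab: "a < d" "b < d"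
  shows "blk (n*k) d (perm_channel (n*k*d) (shuffle_idx k d) (kron Y B)) a b = kron (blk n d Y a b) B"
proof -
  have KC: "kron Y B \<in> carrier_mat (n*k*d) (n*k*d)" using kron_carrier[OF Y B] by (simp add: ac_simps)
  have lt: "\<forall>r<n*k*d. shuffle_idx k d r < n*k*d" using shuffle_idx_lt by blast
  show ?thesis
  proof (rule eq_matI)
    fix u w assume "u < dim_row (kron (blk n d Y a b) B)" "w < dim_col (kron (blk n d Y a b) B)"
    hence uw: "u < n*k" "w < n*k" using B by auto
    have l: "u*d+a < n*k*d" "w*d+b < n*k*d" using block_idx_lt[OF uw(1) ab(1)] block_idx_lt[OF uw(2) ab(2)] by auto
    have u2: "u div k < n" "w div k < n" "u mod k < k" "w mod k < k" using uw by (auto simp: div_lt_mult mod_lt_mult)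
    have p: "shuffle_idx k d (u*d+a) = (u div k * d + a) * k + u mod k" "shuffle_idx k d (w*d+b) = (w div k * d + b) * k + w mod k"
      using ab by (simp_all add: shuffle_idx_def)
    have q: "u div k * d + a < n*d" "w div k * d + b < n*d" using block_idx_lt[OF u2(1) ab(1)] block_idx_lt[OF u2(2) ab(2)] by auto
    have "blk (n*k) d (perm_channel (n*k*d) (shuffle_idx k d) (kron Y B)) a b $$ (u,w) = kron Y B $$ (shuffle_idx k d (u*d+a), shuffle_idx k d (w*d+b))"
      using uw l lt by (simp add: perm_channel_in[OF KC])
    also have "\<dots> = Y $$ (u div k * d + a, w div k * d + b) * B $$ (u mod k, w mod k)"
      unfolding p using Y B q u2 block_idx_lt[OF q(1) u2(3)] block_idx_lt[OF q(2) u2(4)] by (simp add: index_kron)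
    also have "\<dots> = kron (blk n d Y a b) B $$ (u,w)"
      using uw B u2 by (simp add: index_kron)
    finally show "blk (n*k) d (perm_channel (n*k*d) (shuffle_idx k d) (kron Y B)) a b $$ (u,w) = kron (blk n d Y a b) B $$ (u,w)" .
  qed (use B in auto)
qed

definition partial_trace :: "nat \<Rightarrow> nat \<Rightarrow> smap" where
  "partial_trace m d = kraus_map (m*d) m (\<lambda>a. mat m (m*d) (\<lambda>(i,u). if u = i*d+a then 1 else 0)) d"

lemma partial_trace_in: assumes Y: "Y \<in> carrier_mat (m*d) (m*d)"
  shows "partial_trace m d Y = mat m m (\<lambda>(i,j). \<Sum>a<d. Y $$ (i*d+a, j*d+a))"
proof (rule eq_matI)
  fix i j assume "i < dim_row (mat m m (\<lambda>(i,j). \<Sum>a<d. Y $$ (i*d+a, j*d+a)))" "j < dim_col (mat m m (\<lambda>(i,j). \<Sum>a<d. Y $$ (i*d+a, j*d+a)))"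
  hence ij: "i < m" "j < m" by auto
  have "partial_trace m d Y $$ (i,j) = (\<Sum>a<d. \<Sum>k<m*d. \<Sum>l<m*d. (if k = i*d+a then 1 else 0) * Y $$ (k,l) * cnj (if l = j*d+a then 1 else 0))"
    using ij Y by (simp add: partial_trace_def kraus_map_in)
  also have "\<dots> = (\<Sum>a<d. Y $$ (i*d+a, j*d+a))"
    by (rule sum.cong[OF refl], rule sum_double_delta) (use ij in \<open>auto simp: block_idx_lt\<close>)
  finally show "partial_trace m d Y $$ (i,j) = mat m m (\<lambda>(i,j). \<Sum>a<d. Y $$ (i*d+a, j*d+a)) $$ (i,j)" using ij by simp
qed (simp_all add: partial_trace_def kraus_map_in Y)

lemma channel_partial_trace: assumes "1 \<le> m" "1 \<le> d" shows "channel (m*d) m (partial_trace m d)"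
  unfolding partial_trace_def
proof (rule channel_kraus_map)
  show "1 \<le> m*d" "1 \<le> m" using assms by auto
  show "kraus_complete (m*d) m (\<lambda>a. mat m (m*d) (\<lambda>(i,u). if u = i*d+a then 1 else 0)) d"
    unfolding kraus_complete_def
  proof (intro allI impI)
    fix k l assume kl: "k < m*d" "l < m*d"
    have "(\<Sum>a<d. \<Sum>i<m. cnj (mat m (m*d) (\<lambda>(i,u). if u = i*d+a then 1 else 0) $$ (i,l)) * mat m (m*d) (\<lambda>(i,u). if u = i*d+a then 1 else (0::complex)) $$ (i,k))
       = (\<Sum>a<d. \<Sum>i<m. (\<lambda>u. if l = u \<and> k = u then 1 else 0) (i*d+a))"
      using kl by (auto intro!: sum.cong)
    also have "\<dots> = (\<Sum>i<m. \<Sum>a<d. (\<lambda>u. if l = u \<and> k = u then 1 else 0) (i*d+a))" by (rule sum.swap)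
    also have "\<dots> = (\<Sum>u<m*d. if l = u \<and> k = u then 1 else 0)" by (rule sum_split_mult[symmetric])
    also have "\<dots> = (if k = l then 1 else 0)"
    proof (cases "k = l")
      case False
      have "(\<Sum>u<m*d. if l = u \<and> k = u then 1 else (0::complex)) = 0"
        by (rule sum.neutral) (use False in auto)
      thus ?thesis using False by simp
    qed (use kl in auto)
    finally show "(\<Sum>a<d. \<Sum>i<m. cnj (mat m (m*d) (\<lambda>(i,u). if u = i*d+a then 1 else 0) $$ (i,l)) * mat m (m*d) (\<lambda>(i,u). if u = i*d+a then 1 else (0::complex)) $$ (i,k))
       = (if k = l then 1 else 0)" .
  qed
qed

(* Embedding X |-> X (x) |0><0| of C^n into C^n (x) C^d. *)
definition corner_embed :: "nat \<Rightarrow> nat \<Rightarrow> smap" where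
  "corner_embed n d = kraus_map n (n*d) (\<lambda>_. mat (n*d) n (\<lambda>(r,k). if r = k*d then 1 else 0)) 1"

lemma channel_corner_embed:
  assumes n: "1 \<le> n" and d: "1 \<le> d"
  shows "channel n (n*d) (corner_embed n d)"
  unfolding corner_embed_def
proof (rule channel_kraus_map)
  show "1 \<le> n" "1 \<le> n*d" using assms by auto
  show "kraus_complete n (n*d) (\<lambda>_. mat (n*d) n (\<lambda>(r,k). if r = k*d then 1 else 0)) 1"
    unfolding kraus_complete_def using d by (auto intro!: sum.neutral)
qed

lemma blk_corner_embed:
  assumes X: "X \<in> carrier_mat n n" and d: "1 \<le> d" and ab: "a < d" "b < d"
  shows "blk n d (corner_embed n d X) a b = (if a = 0 \<and> b = 0 then X else 0\<^sub>m n n)"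
proof (rule eq_matI)
  fix i j assume "i < dim_row (if a = 0 \<and> b = 0 then X else 0\<^sub>m n n)" "j < dim_col (if a = 0 \<and> b = 0 then X else 0\<^sub>m n n)"
  hence ij: "i < n" "j < n" using X by (auto split: if_splits)
  have l: "i*d+a < n*d" "j*d+b < n*d" using block_idx_lt[OF ij(1) ab(1)] block_idx_lt[OF ij(2) ab(2)] by auto
  have "blk n d (corner_embed n d X) a b $$ (i,j) = (\<Sum>k<n. \<Sum>l<n. (if i*d+a = k*d then 1 else 0) * X $$ (k,l) * cnj (if j*d+b = l*d then 1 else 0))"
    using ij l X by (simp add: corner_embed_def kraus_map_in)
  also have "\<dots> = (\<Sum>k<n. \<Sum>l<n. (if k = i \<and> a = 0 then 1 else 0) * X $$ (k,l) * cnj (if l = j \<and> b = 0 then 1 else 0))"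
    using ab by (simp only: block_idx_eq_corner conj_commute)
  also have "\<dots> = (if a = 0 \<and> b = 0 then X else 0\<^sub>m n n) $$ (i,j)"
  proof (cases "a = 0 \<and> b = 0")
    case True thus ?thesis using sum_double_delta[OF ij, of X] by simp
  next
    case False thus ?thesis using ij by (auto intro!: sum.neutral)
  qed
  finally show "blk n d (corner_embed n d X) a b $$ (i,j) = (if a = 0 \<and> b = 0 then X else 0\<^sub>m n n) $$ (i,j)" .
qed (use X in auto)

lemma partial_trace_tensor_corner_embed:
  assumes f: "lin_map n m f" and d: "1 \<le> d"
  shows "partial_trace m d \<circ> tensor_id n m d f \<circ> corner_embed n d = f"
proof (rule ext)
  have n: "1 \<le> n" and m: "1 \<le> m" using f by (auto simp: lin_map_def)
  have lPT: "lin_map (m*d) m (partial_trace m d)" using channel_partial_trace[OF m d] by (simp add: channel_def)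
  have lE: "lin_map n (n*d) (corner_embed n d)" using channel_corner_embed[OF n d] by (simp add: channel_def)
  fix X :: "complex mat"
  show "(partial_trace m d \<circ> tensor_id n m d f \<circ> corner_embed n d) X = f X"
  proof (cases "X \<in> carrier_mat n n")
    case False
    thus ?thesis using lin_out[OF lE False] lin_out[OF f False] tensor_zero[OF f] lin_zero[OF lPT] by simp
  next
    case X: True
    have EX: "corner_embed n d X \<in> carrier_mat (n*d) (n*d)" by (rule lin_carrier[OF lE])
    have TC: "tensor_id n m d f (corner_embed n d X) \<in> carrier_mat (m*d) (m*d)" by (rule tensor_id_carrier)
    show ?thesis
    proof (rule eq_matI)
      fix i j assume "i < dim_row (f X)" "j < dim_col (f X)"
      hence ij: "i < m" "j < m" by (simp_all add: lin_dim[OF f])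
      have "(partial_trace m d \<circ> tensor_id n m d f \<circ> corner_embed n d) X $$ (i,j) = (\<Sum>a<d. tensor_id n m d f (corner_embed n d X) $$ (i*d+a, j*d+a))"
        using ij by (simp add: partial_trace_in[OF TC])
      also have "\<dots> = (\<Sum>a<d. f (blk n d (corner_embed n d X) a a) $$ (i,j))"
        using ij by (intro sum.cong refl) (simp add: tensor_entry[OF EX])
      also have "\<dots> = (\<Sum>a<d. if a = 0 then f X $$ (i,j) else 0)"
        using ij by (intro sum.cong refl) (simp add: blk_corner_embed[OF X d] lin_zero[OF f])
      also have "\<dots> = f X $$ (i,j)" using d by simp
      finally show "(partial_trace m d \<circ> tensor_id n m d f \<circ> corner_embed n d) X $$ (i,j) = f X $$ (i,j)" .
    qed (simp_all add: lin_dim[OF f] lin_dim[OF lPT])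
  qed
qed

lemma cl_in: "X \<in> carrier_mat 1 1 \<Longrightarrow> cl k p X = (X $$ (0,0)) \<cdot>\<^sub>m diagm k p"
  by (simp add: cl_def)

lemma prob_dist_pos: "prob_dist k q \<Longrightarrow> 1 \<le> k"
  by (cases k) (auto simp: prob_dist_def)

definition prep_op :: "nat \<Rightarrow> (nat \<Rightarrow> real) \<Rightarrow> nat \<Rightarrow> complex mat" where
  "prep_op k q y = mat k 1 (\<lambda>(r,_). if r = y then complex_of_real (sqrt (q y)) else 0)"

lemma index_prep_op[simp]:
  "i < k \<Longrightarrow> j < 1 \<Longrightarrow> prep_op k q y $$ (i,j) = (if i = y then complex_of_real (sqrt (q y)) else 0)"
  by (simp add: prep_op_def)

lemma cl_kraus:
  assumes q: "\<forall>y<k. 0 \<le> q y"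
  shows "cl k q = kraus_map 1 k (prep_op k q) k"
proof (rule ext)
  fix X :: "complex mat"
  show "cl k q X = kraus_map 1 k (prep_op k q) k X"
  proof (cases "X \<in> carrier_mat 1 1")
    case False thus ?thesis by (simp add: cl_def kraus_map_def restr_out)
  next
    case X: True
    show ?thesis
    proof (rule eq_matI)
      fix i j assume "i < dim_row (kraus_map 1 k (prep_op k q) k X)" "j < dim_col (kraus_map 1 k (prep_op k q) k X)"
      hence ij: "i < k" "j < k" by simp_all
      have sq: "complex_of_real (sqrt (q y)) * cnj (complex_of_real (sqrt (q y))) = complex_of_real (q y)"
        if "y < k" for y using q that by (simp flip: of_real_mult)
      have "kraus_map 1 k (prep_op k q) k X $$ (i,j)
          = (\<Sum>y<k. if i = y \<and> j = y then complex_of_real (q y) * X $$ (0,0) else 0)"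
        using X ij sq by (auto simp: kraus_map_in algebra_simps intro!: sum.cong)
      also have "\<dots> = cl k q X $$ (i,j)"
        using X ij by (cases "i = j") (auto simp: cl_in intro!: sum.neutral)
      finally show "cl k q X $$ (i,j) = kraus_map 1 k (prep_op k q) k X $$ (i,j)" by simp
    qed (use X in \<open>simp_all add: cl_in kraus_map_in\<close>)
  qed
qed

lemma channel_cl:
  assumes q: "prob_dist k q"
  shows "channel 1 k (cl k q)"
proof -
  have qp: "\<forall>y<k. 0 \<le> q y" and qs: "(\<Sum>y<k. q y) = 1" using q by (auto simp: prob_dist_def)
  show ?thesis unfolding cl_kraus[OF qp]
  proof (rule channel_kraus_map)
    show "1 \<le> (1::nat)" "1 \<le> k" using prob_dist_pos[OF q] by auto
    have col: "(\<Sum>i<k. cnj (prep_op k q a $$ (i,0)) * prep_op k q a $$ (i,0)) = complex_of_real (q a)"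
      if a: "a < k" for a
    proof -
      have "(\<Sum>i<k. cnj (prep_op k q a $$ (i,0)) * prep_op k q a $$ (i,0))
          = (\<Sum>i<k. if i = a then complex_of_real (q a) else 0)"
        using qp a by (intro sum.cong refl) (auto simp flip: of_real_mult)
      thus ?thesis using a by simp
    qed
    have "(\<Sum>a<k. \<Sum>i<k. cnj (prep_op k q a $$ (i,0)) * prep_op k q a $$ (i,0))
        = (\<Sum>a<k. complex_of_real (q a))"
      using col by (intro sum.cong) auto
    also have "\<dots> = 1" using qs by (simp flip: of_real_sum)
    finally show "kraus_complete 1 k (prep_op k q) k"
      unfolding kraus_complete_def by simp
  qed
qed

lemma tangent_cl: assumes dl: "tangent_dist k \<delta>" and k: "1 \<le> k" shows "tangent 1 k (cl k \<delta>)"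
  unfolding tangent_def lin_map_def
proof (intro conjI allI impI ballI)
  show "1 \<le> (1::nat)" "1 \<le> k" using k by auto
next
  fix X :: "complex mat" assume "X \<notin> carrier_mat 1 1" thus "cl k \<delta> X = 0\<^sub>m k k" by (simp add: cl_def restr_out)
next
  fix X :: "complex mat" assume "X \<in> carrier_mat 1 1" thus "cl k \<delta> X \<in> carrier_mat k k" by (simp add: cl_in)
next
  fix X Y :: "complex mat" assume X: "X \<in> carrier_mat 1 1" and Y: "Y \<in> carrier_mat 1 1"
  show "cl k \<delta> (X + Y) = cl k \<delta> X + cl k \<delta> Y"
    using X Y by (auto simp: cl_in ring_distribs intro!: eq_matI)
next
  fix c and X :: "complex mat" assume X: "X \<in> carrier_mat 1 1"
  show "cl k \<delta> (c \<cdot>\<^sub>m X) = c \<cdot>\<^sub>m cl k \<delta> X"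
    using X by (auto simp: cl_in intro!: eq_matI)
next
  fix X :: "complex mat" assume X: "X \<in> carrier_mat 1 1"
  show "cl k \<delta> (adj X) = adj (cl k \<delta> X)"
    using X by (auto simp: cl_in intro!: eq_matI)
next
  fix X :: "complex mat" assume X: "X \<in> carrier_mat 1 1"
  have "mtrace (cl k \<delta> X) = (\<Sum>i<k. X $$ (0,0) * complex_of_real (\<delta> i))" using X by (simp add: cl_in mtrace_def)
  also have "\<dots> = X $$ (0,0) * complex_of_real (\<Sum>i<k. \<delta> i)" by (simp add: sum_distrib_left)
  also have "\<dots> = 0" using dl by (simp add: tangent_dist_def)
  finally show "mtrace (cl k \<delta> X) = 0" .
qed

lemma swap_prep_eq_kron: assumes X: "X \<in> carrier_mat n n"
  shows "perm_channel (n*k) (swap_idx n k) (tensor_id 1 k n (cl k p) X) = kron X (diagm k p)"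
proof -
  have X1: "X \<in> carrier_mat (1*n) (1*n)" using X by simp
  have TC: "tensor_id 1 k n (cl k p) X \<in> carrier_mat (n*k) (n*k)"
    using tensor_id_carrier[of 1 k n "cl k p" X] by (simp add: mult.commute)
  show ?thesis
  proof (rule eq_matI)
    fix r s assume "r < dim_row (kron X (diagm k p))" "s < dim_col (kron X (diagm k p))"
    hence rs: "r < n*k" "s < n*k" using X by auto
    have d: "r div k < n" "s div k < n" "r mod k < k" "s mod k < k" using rs by (auto simp: div_lt_mult mod_lt_mult)
    have "perm_channel (n*k) (swap_idx n k) (tensor_id 1 k n (cl k p) X) $$ (r,s) = tensor_id 1 k n (cl k p) X $$ (swap_idx n k r, swap_idx n k s)"
    proof -
      have "\<forall>r<n*k. swap_idx n k r < n*k" using swap_idx_lt by blast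
      from perm_channel_in[OF TC this] show ?thesis using rs by simp
    qed
    also have "\<dots> = cl k p (blk 1 n X (r div k) (s div k)) $$ (r mod k, s mod k)"
      unfolding swap_idx_def by (rule tensor_entry[OF X1 d(3,4) d(1,2)])
    also have "\<dots> = X $$ (r div k, s div k) * diagm k p $$ (r mod k, s mod k)"
      using d by (simp add: cl_in)
    also have "\<dots> = kron X (diagm k p) $$ (r,s)" using X rs by (simp add: index_kron)
    finally show "perm_channel (n*k) (swap_idx n k) (tensor_id 1 k n (cl k p) X) $$ (r,s) = kron X (diagm k p) $$ (r,s)" .
  qed (use X in \<open>simp_all add: perm_channel_def\<close>)
qed

lemma swap_prep_factorisation:
  assumes L: "lin_map (n*k) m Lam" and F: "lin_map n m F" and k: "1 \<le> k"
    and eq: "\<forall>X\<in>carrier_mat n n. F X = Lam (kron X (diagm k p))"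
  shows "(Lam \<circ> perm_channel (n*k) (swap_idx n k)) \<circ> tensor_id 1 k n (cl k p) = F"
proof (rule ext)
  fix X :: "complex mat"
  have n: "1 \<le> n" using F by (simp add: lin_map_def)
  have lP: "lin_map (n*k) (n*k) (perm_channel (n*k) (swap_idx n k))" using channel_swap[OF n k] by (simp add: channel_def mult.commute)
  show "((Lam \<circ> perm_channel (n*k) (swap_idx n k)) \<circ> tensor_id 1 k n (cl k p)) X = F X"
  proof (cases "X \<in> carrier_mat n n")
    case False
    hence "tensor_id 1 k n (cl k p) X = 0\<^sub>m (n*k) (n*k)" by (simp add: tensor_id_def restr_out mult.commute)
    thus ?thesis using False lin_zero[OF lP] lin_zero[OF L] lin_out[OF F] by simp
  next
    case True
    show ?thesis unfolding o_def swap_prep_eq_kron[OF True] using eq True by simp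
  qed
qed

lemma G_le_J_of_sim:
  assumes M: "axiom_M G" and E: "axiom_E G" and N: "axiom_N G"
    and sim: "classical_sim n m Phi D k q \<delta> Lam" and Phi: "channel n m Phi" and D: "tangent n m D"
  shows "G n m Phi D \<le> J k q \<delta>"
proof -
  have pq: "prob_dist k q" and td: "tangent_dist k \<delta>" and L: "channel (n*k) m Lam"
    and eq1: "\<forall>X\<in>carrier_mat n n. Phi X = Lam (kron X (diagm k q))"
    and eq2: "\<forall>X\<in>carrier_mat n n. D X = Lam (kron X (diagm k \<delta>))"
    using sim by (auto simp: classical_sim_def)
  have k: "1 \<le> k" by (rule prob_dist_pos[OF pq])
  have lL: "lin_map (n*k) m Lam" using L by (simp add: channel_def)
  have lPhi: "lin_map n m Phi" and lD: "lin_map n m D"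
    using Phi D by (simp_all add: channel_def tangent_def)
  have n: "1 \<le> n" using lPhi by (simp add: lin_map_def)
  define Lam' where "Lam' = Lam \<circ> perm_channel (n*k) (swap_idx n k)"
  have chq: "channel 1 k (cl k q)" by (rule channel_cl[OF pq])
  have tgd: "tangent 1 k (cl k \<delta>)" by (rule tangent_cl[OF td k])
  have chT: "channel n (k*n) (tensor_id 1 k n (cl k q))" using channel_tensor[OF chq n] by simp
  have tgT: "tangent n (k*n) (tensor_id 1 k n (cl k \<delta>))" using tangent_tensor[OF tgd n] by simp
  have chL: "channel (k*n) m Lam'"
    unfolding Lam'_def by (rule channel_comp[OF channel_swap[OF n k] L])
  have "Phi = Lam' \<circ> tensor_id 1 k n (cl k q)"
    unfolding Lam'_def by (rule swap_prep_factorisation[OF lL lPhi k eq1, symmetric])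
  moreover have "D = Lam' \<circ> tensor_id 1 k n (cl k \<delta>)"
    unfolding Lam'_def by (rule swap_prep_factorisation[OF lL lD k eq2, symmetric])
  ultimately have "G n m Phi D \<le> G n (k*n) (tensor_id 1 k n (cl k q)) (tensor_id 1 k n (cl k \<delta>))"
    using M chT tgT chL unfolding axiom_M_def by blast
  also have "\<dots> = G 1 k (cl k q) (cl k \<delta>)"
    using E chq tgd n unfolding axiom_E_def by (metis mult_1)
  also have "\<dots> = J k q \<delta>" using N pq td unfolding axiom_N_def by blast
  finally show ?thesis .
qed

lemma Gmax_le: "classical_sim n m Phi D k q \<delta> Lam \<Longrightarrow> Gmax n m Phi D \<le> J k q \<delta>"
  unfolding Gmax_def by (rule Inf_lower) blast

lemma Gmax_ge: "(\<And>k q \<delta> Lam. classical_sim n m Phi D k q \<delta> Lam \<Longrightarrow> x \<le> J k q \<delta>) \<Longrightarrow> x \<le> Gmax n m Phi D"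
  unfolding Gmax_def by (rule Inf_greatest) blast

lemma sim_precomp:
  assumes Psi: "channel k0 n Psi" and sim: "classical_sim n m Phi D kk q \<delta> Lam"
  shows "classical_sim k0 m (Phi \<circ> Psi) (D \<circ> Psi) kk q \<delta> (Lam \<circ> tensor_id k0 n kk Psi)"
proof -
  have pq: "prob_dist kk q" and L: "channel (n*kk) m Lam" using sim by (auto simp: classical_sim_def)
  have lPsi: "lin_map k0 n Psi" using Psi by (simp add: channel_def)
  have kk: "1 \<le> kk" by (rule prob_dist_pos[OF pq])
  show ?thesis unfolding classical_sim_def
  proof (intro conjI ballI)
    show "channel (k0*kk) m (Lam \<circ> tensor_id k0 n kk Psi)" by (rule channel_comp[OF channel_tensor[OF Psi kk] L])
  next
    fix X :: "complex mat" assume X: "X \<in> carrier_mat k0 k0"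
    have PX: "Psi X \<in> carrier_mat n n" by (rule lin_carrier[OF lPsi])
    show "(Phi \<circ> Psi) X = (Lam \<circ> tensor_id k0 n kk Psi) (kron X (diagm kk q))"
      using sim PX by (simp add: tensor_kron[OF lPsi X] classical_sim_def)
    show "(D \<circ> Psi) X = (Lam \<circ> tensor_id k0 n kk Psi) (kron X (diagm kk \<delta>))"
      using sim PX by (simp add: tensor_kron[OF lPsi X] classical_sim_def)
  qed (use sim in \<open>simp_all add: classical_sim_def\<close>)
qed

lemma sim_postcomp:
  assumes Psi: "channel m k1 Psi" and sim: "classical_sim n m Phi D kk q \<delta> Lam"
  shows "classical_sim n k1 (Psi \<circ> Phi) (Psi \<circ> D) kk q \<delta> (Psi \<circ> Lam)"
  using sim channel_comp[OF _ Psi] unfolding classical_sim_def by auto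

lemma Gmax_pre: "channel k0 n Psi \<Longrightarrow> Gmax k0 m (Phi \<circ> Psi) (D \<circ> Psi) \<le> Gmax n m Phi D"
  by (rule Gmax_ge, rule Gmax_le, erule sim_precomp)

lemma Gmax_post: "channel m k1 Psi \<Longrightarrow> Gmax n k1 (Psi \<circ> Phi) (Psi \<circ> D) \<le> Gmax n m Phi D"
  by (rule Gmax_ge, rule Gmax_le, erule sim_postcomp)

lemma axiom_M_Gmax: "axiom_M Gmax"
  unfolding axiom_M_def using Gmax_pre Gmax_post by blast

lemma tensor_simulated:
  assumes Y: "Y \<in> carrier_mat (n*d) (n*d)"
    and eqF: "\<forall>X\<in>carrier_mat n n. F X = Lam (kron X (diagm k p))"
  shows "tensor_id n m d F Y
    = (tensor_id (n*k) m d Lam \<circ> perm_channel (n*k*d) (shuffle_idx k d)) (kron Y (diagm k p))"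
proof -
  let ?P = "perm_channel (n*k*d) (shuffle_idx k d) (kron Y (diagm k p))"
  have PC: "?P \<in> carrier_mat (n*k*d) (n*k*d)"
    unfolding perm_channel_def by (rule kraus_map_carrier)
  show ?thesis
  proof (rule eq_matI)
    fix r s assume "r < dim_row ((tensor_id (n*k) m d Lam \<circ> perm_channel (n*k*d) (shuffle_idx k d)) (kron Y (diagm k p)))"
      "s < dim_col ((tensor_id (n*k) m d Lam \<circ> perm_channel (n*k*d) (shuffle_idx k d)) (kron Y (diagm k p)))"
    hence rs: "r < m*d" "s < m*d" by auto
    have md: "r mod d < d" "s mod d < d" using rs by (auto simp: mod_lt_mult)
    have "tensor_id (n*k) m d Lam ?P $$ (r,s) = Lam (blk (n*k) d ?P (r mod d) (s mod d)) $$ (r div d, s div d)"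
      using rs by (simp add: tensor_id_in[OF PC])
    also have "\<dots> = Lam (kron (blk n d Y (r mod d) (s mod d)) (diagm k p)) $$ (r div d, s div d)"
      by (simp add: blk_shuffle_kron[OF Y diagm_carrier md])
    also have "\<dots> = F (blk n d Y (r mod d) (s mod d)) $$ (r div d, s div d)"
      using eqF by simp
    also have "\<dots> = tensor_id n m d F Y $$ (r,s)" using rs by (simp add: tensor_id_in[OF Y])
    finally show "tensor_id n m d F Y $$ (r,s)
      = (tensor_id (n*k) m d Lam \<circ> perm_channel (n*k*d) (shuffle_idx k d)) (kron Y (diagm k p)) $$ (r,s)"
      by simp
  qed simp_all
qed

lemma sim_tensor:
  assumes sim: "classical_sim n m Phi D k q \<delta> Lam" and d: "1 \<le> d"
  shows "classical_sim (n*d) (m*d) (tensor_id n m d Phi) (tensor_id n m d D) k q \<delta>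
           (tensor_id (n*k) m d Lam \<circ> perm_channel (n*k*d) (shuffle_idx k d))"
proof -
  have pq: "prob_dist k q" and L: "channel (n*k) m Lam"
    using sim by (auto simp: classical_sim_def)
  have k: "1 \<le> k" by (rule prob_dist_pos[OF pq])
  have n: "1 \<le> n" using L by (simp add: channel_def lin_map_def)
  have "channel (n*k*d) (n*k*d) (perm_channel (n*k*d) (shuffle_idx k d))"
    by (rule channel_perm_channel) (use n k d shuffle_idx_lt shuffle_idx_sum in auto)
  hence chP: "channel (n*d*k) (n*k*d) (perm_channel (n*k*d) (shuffle_idx k d))"
    by (simp add: ac_simps)
  show ?thesis unfolding classical_sim_def
  proof (intro conjI ballI)
    show "channel (n*d*k) (m*d) (tensor_id (n*k) m d Lam \<circ> perm_channel (n*k*d) (shuffle_idx k d))"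
      by (rule channel_comp[OF chP channel_tensor[OF L d]])
  qed (use sim tensor_simulated in \<open>simp_all add: classical_sim_def\<close>)
qed

lemma axiom_E_Gmax: "axiom_E Gmax"
  unfolding axiom_E_def
proof (intro allI impI, elim conjE)
  fix n m d :: nat and Phi D :: smap assume Phi: "channel n m Phi" and D: "tangent n m D" and d: "1 \<le> d"
  have lPhi: "lin_map n m Phi" using Phi by (simp add: channel_def)
  have lD: "lin_map n m D" using D by (simp add: tangent_def)
  have n: "1 \<le> n" and m: "1 \<le> m" using lPhi by (auto simp: lin_map_def)
  show "Gmax (n*d) (m*d) (tensor_id n m d Phi) (tensor_id n m d D) = Gmax n m Phi D"
  proof (rule antisym)
    show "Gmax (n*d) (m*d) (tensor_id n m d Phi) (tensor_id n m d D) \<le> Gmax n m Phi D"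
      by (rule Gmax_ge, rule Gmax_le, erule sim_tensor[OF _ d])
  next
    have "Gmax n m Phi D = Gmax n m (partial_trace m d \<circ> (tensor_id n m d Phi \<circ> corner_embed n d)) (partial_trace m d \<circ> (tensor_id n m d D \<circ> corner_embed n d))"
      using partial_trace_tensor_corner_embed[OF lPhi d] partial_trace_tensor_corner_embed[OF lD d] by (simp add: o_assoc)
    also have "\<dots> \<le> Gmax n (m*d) (tensor_id n m d Phi \<circ> corner_embed n d) (tensor_id n m d D \<circ> corner_embed n d)"
      by (rule Gmax_post[OF channel_partial_trace[OF m d]])
    also have "\<dots> \<le> Gmax (n*d) (m*d) (tensor_id n m d Phi) (tensor_id n m d D)"
      by (rule Gmax_pre[OF channel_corner_embed[OF n d]])
    finally show "Gmax n m Phi D \<le> Gmax (n*d) (m*d) (tensor_id n m d Phi) (tensor_id n m d D)" .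
  qed
qed

lemma J_finite:
  assumes qn: "\<forall>y<k. 0 \<le> q y" and qz: "\<forall>y<k. q y = 0 \<longrightarrow> d y = 0"
  shows "J k q d = ennreal (\<Sum>y<k. (d y)^2 / q y)"
proof -
  have "J k q d = (\<Sum>y<k. ennreal ((d y)^2 / q y))"
    unfolding J_def using qz by (intro sum.cong refl) auto
  also have "\<dots> = ennreal (\<Sum>y<k. (d y)^2 / q y)" using qn by (intro sum_ennreal) auto
  finally show ?thesis .
qed

(* Data processing for J: chi^2-type divergences contract under stochastic matrices; the
   core is the weighted Cauchy-Schwarz inequality (sum d t)^2 / (sum q t) <= sum t d^2 / q. *)
lemma cauchy_schwarz_term:
  fixes t q d c :: real
  assumes t: "0 \<le> t" and q: "0 \<le> q" and qz: "q = 0 \<longrightarrow> d = 0"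
  shows "2*c*(d*t) - c^2*(q*t) \<le> t * (d^2 / q)"
proof (cases "q = 0")
  case True thus ?thesis using qz by simp
next
  case False
  hence qp: "q > 0" using q by simp
  have "t * (d^2 / q) - (2*c*(d*t) - c^2*(q*t)) = t * (d - c*q)^2 / q"
    using qp by (simp add: field_simps power2_eq_square)
  also have "\<dots> \<ge> 0" using t qp by simp
  finally show ?thesis by simp
qed

lemma weighted_cauchy_schwarz:
  fixes t q d :: "nat \<Rightarrow> real"
  assumes t: "\<forall>y<K. 0 \<le> t y" and q: "\<forall>y<K. 0 \<le> q y" and qz: "\<forall>y<K. q y = 0 \<longrightarrow> d y = 0"
  shows "(\<Sum>y<K. d y * t y)^2 / (\<Sum>y<K. q y * t y) \<le> (\<Sum>y<K. t y * ((d y)^2 / q y))"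
proof -
  define P where "P = (\<Sum>y<K. q y * t y)"
  define Dl where "Dl = (\<Sum>y<K. d y * t y)"
  have R: "0 \<le> (\<Sum>y<K. t y * ((d y)^2 / q y))" using t q by (intro sum_nonneg) auto
  have P0: "0 \<le> P" unfolding P_def using t q by (intro sum_nonneg) auto
  show ?thesis
  proof (cases "P = 0")
    case True thus ?thesis using R unfolding P_def by simp
  next
    case False
    hence Pp: "P > 0" using P0 by simp
    define c where "c = Dl / P"
    have "(\<Sum>y<K. 2*c*(d y * t y) - c^2*(q y * t y)) \<le> (\<Sum>y<K. t y * ((d y)^2 / q y))"
      using t q qz by (intro sum_mono cauchy_schwarz_term) auto
    moreover have "(\<Sum>y<K. 2*c*(d y * t y) - c^2*(q y * t y)) = 2*c*Dl - c^2*P"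
      unfolding Dl_def P_def by (simp add: sum_subtractf sum_distrib_left)
    moreover have "2*c*Dl - c^2*P = Dl^2 / P" unfolding c_def using Pp by (simp add: field_simps power2_eq_square)
    ultimately show ?thesis unfolding Dl_def P_def by simp
  qed
qed

lemma chi2_stochastic_contract:
  fixes T :: "nat \<Rightarrow> nat \<Rightarrow> real"
  assumes Tn: "\<forall>y<k. \<forall>y'<k'. 0 \<le> T y y'" and Ts: "\<forall>y'<k'. (\<Sum>y<k. T y y') = 1"
    and qn: "\<forall>y'<k'. 0 \<le> q y'" and qz: "\<forall>y'<k'. q y' = 0 \<longrightarrow> d y' = 0"
  shows "(\<Sum>y<k. (\<Sum>y'<k'. d y' * T y y')^2 / (\<Sum>y'<k'. q y' * T y y')) \<le> (\<Sum>y'<k'. (d y')^2 / q y')"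
proof -
  have "(\<Sum>y<k. (\<Sum>y'<k'. d y' * T y y')^2 / (\<Sum>y'<k'. q y' * T y y')) \<le> (\<Sum>y<k. \<Sum>y'<k'. T y y' * ((d y')^2 / q y'))"
    using Tn qn qz by (intro sum_mono weighted_cauchy_schwarz) auto
  also have "\<dots> = (\<Sum>y'<k'. \<Sum>y<k. T y y' * ((d y')^2 / q y'))" by (rule sum.swap)
  also have "\<dots> = (\<Sum>y'<k'. (\<Sum>y<k. T y y') * ((d y')^2 / q y'))"
    by (rule sum.cong[OF refl], rule sum_distrib_right[symmetric])
  also have "\<dots> = (\<Sum>y'<k'. (d y')^2 / q y')" using Ts by simp
  finally show ?thesis .
qed

lemma J_stochastic_mono:
  fixes T :: "nat \<Rightarrow> nat \<Rightarrow> real"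
  assumes Tn: "\<forall>y<k. \<forall>y'<k'. 0 \<le> T y y'" and Ts: "\<forall>y'<k'. (\<Sum>y<k. T y y') = 1"
    and qn: "\<forall>y'<k'. 0 \<le> q y'"
    and pc: "\<And>y. y < k \<Longrightarrow> p y = (\<Sum>y'<k'. q y' * T y y')"
    and dc: "\<And>y. y < k \<Longrightarrow> \<delta> y = (\<Sum>y'<k'. \<delta>' y' * T y y')"
  shows "J k p \<delta> \<le> J k' q \<delta>'"
proof (cases "\<forall>y'<k'. q y' = 0 \<longrightarrow> \<delta>' y' = 0")
  case False
  then obtain y' where y': "y' < k'" "q y' = 0" "\<delta>' y' \<noteq> 0" by blast
  have "J k' q \<delta>' = \<infinity>" unfolding J_def infinity_ennreal_def using y' by (subst ennreal_sum_eq_top) auto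
  thus ?thesis by simp
next
  case qz: True
  have pn: "\<forall>y<k. 0 \<le> p y" using pc qn Tn by (auto intro!: sum_nonneg)
  have pz: "\<forall>y<k. p y = 0 \<longrightarrow> \<delta> y = 0"
  proof (intro allI impI)
    fix y assume y: "y < k" and p0: "p y = 0"
    have "\<forall>y'\<in>{..<k'}. q y' * T y y' = 0"
      using p0 pc[OF y] qn Tn y by (subst sum_nonneg_eq_0_iff[symmetric]) auto
    hence "\<forall>y'\<in>{..<k'}. \<delta>' y' * T y y' = 0" using qz by auto
    hence "(\<Sum>y'<k'. \<delta>' y' * T y y') = 0" by (intro sum.neutral) blast
    thus "\<delta> y = 0" using dc[OF y] by simp
  qed
  have "J k p \<delta> = ennreal (\<Sum>y<k. (\<delta> y)^2 / p y)" by (rule J_finite[OF pn pz])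
  also have "\<dots> = ennreal (\<Sum>y<k. (\<Sum>y'<k'. \<delta>' y' * T y y')^2 / (\<Sum>y'<k'. q y' * T y y'))"
    using pc dc by simp
  also have "\<dots> \<le> ennreal (\<Sum>y'<k'. (\<delta>' y')^2 / q y')"
    by (rule ennreal_leI, rule chi2_stochastic_contract[OF Tn Ts qn qz])
  also have "\<dots> = J k' q \<delta>'" by (rule J_finite[OF qn qz, symmetric])
  finally show ?thesis .
qed

(* A channel between classical systems acts on diagonals via the stochastic matrix
   T y y' = <y| Lam(|y'><y'|) |y>. *)
definition diag_transition :: "smap \<Rightarrow> nat \<Rightarrow> nat \<Rightarrow> nat \<Rightarrow> real" where
  "diag_transition Lam k' y y' = Re (Lam (diag_unit k' y') $$ (y,y))"

lemma diag_transition_stochastic: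
  assumes L: "channel k' k Lam"
  shows "\<forall>y<k. \<forall>y'<k'. 0 \<le> diag_transition Lam k' y y'"
    and "\<forall>y'<k'. (\<Sum>y<k. diag_transition Lam k' y y') = 1"
proof (intro allI impI)
  fix y y' assume y: "y < k" and y': "y' < k'"
  have "psd k (Lam (diag_unit k' y'))" by (rule channel_psd[OF L psd_diag_unit[OF y']])
  thus "0 \<le> diag_transition Lam k' y y'" unfolding diag_transition_def using psd_diag y by blast
next
  show "\<forall>y'<k'. (\<Sum>y<k. diag_transition Lam k' y y') = 1"
  proof (intro allI impI)
    fix y' assume y': "y' < k'"
    have lL: "lin_map k' k Lam" using L by (simp add: channel_def)
    have "mtrace (Lam (diag_unit k' y')) = mtrace (diag_unit k' y')" using L by (simp add: channel_def)
    also have "\<dots> = (\<Sum>i<k'. complex_of_real (if i = y' then 1 else 0))" by (simp add: mtrace_def diag_unit_def)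
    also have "\<dots> = (\<Sum>i<k'. if i = y' then 1 else 0)" by (intro sum.cong) auto
    also have "\<dots> = 1" using y' by simp
    finally have "Re (mtrace (Lam (diag_unit k' y'))) = 1" by simp
    thus "(\<Sum>y<k. diag_transition Lam k' y y') = 1"
      by (simp add: mtrace_def diag_transition_def Re_sum lin_dim[OF lL])
  qed
qed

lemma diag_transition_action:
  assumes L: "lin_map k' k Lam" and y: "y < k" and Dw: "diagm k w = Lam (diagm k' w')"
  shows "w y = (\<Sum>y'<k'. w' y' * diag_transition Lam k' y y')"
proof -
  have "complex_of_real (w y) = Lam (diagm k' w') $$ (y,y)" using y by (simp flip: Dw)
  also have "\<dots> = (\<Sum>y'<k'. complex_of_real (w' y') * Lam (diag_unit k' y') $$ (y,y))"
    by (rule lin_diag_expand[OF L y])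
  finally have "Re (complex_of_real (w y)) = Re (\<Sum>y'<k'. complex_of_real (w' y') * Lam (diag_unit k' y') $$ (y,y))"
    by simp
  thus ?thesis by (simp add: Re_sum diag_transition_def)
qed

lemma J_data_processing:
  assumes sim: "classical_sim 1 k (cl k p) (cl k \<delta>) k' q \<delta>' Lam"
  shows "J k p \<delta> \<le> J k' q \<delta>'"
proof -
  have pq: "prob_dist k' q" and L: "channel k' k Lam"
    and e1: "\<forall>X\<in>carrier_mat 1 1. cl k p X = Lam (kron X (diagm k' q))"
    and e2: "\<forall>X\<in>carrier_mat 1 1. cl k \<delta> X = Lam (kron X (diagm k' \<delta>'))"
    using sim by (auto simp: classical_sim_def)
  have lL: "lin_map k' k Lam" using L by (simp add: channel_def)
  have one: "(1\<^sub>m 1 :: complex mat) \<in> carrier_mat 1 1" by simp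
  have c1: "cl k w (1\<^sub>m 1) = diagm k w" for w
  proof -
    have "cl k w (1\<^sub>m 1) = 1 \<cdot>\<^sub>m diagm k w" using one by (simp add: cl_in)
    also have "\<dots> = diagm k w" by (rule eq_matI) auto
    finally show ?thesis .
  qed
  have Dp: "diagm k p = Lam (diagm k' q)"
    using bspec[OF e1 one] unfolding c1 kron_one1[OF diagm_carrier] .
  have Dd: "diagm k \<delta> = Lam (diagm k' \<delta>')"
    using bspec[OF e2 one] unfolding c1 kron_one1[OF diagm_carrier] .
  show ?thesis
  proof (rule J_stochastic_mono[OF diag_transition_stochastic[OF L]])
    show "\<forall>y'<k'. 0 \<le> q y'" using pq by (simp add: prob_dist_def)
  qed (use diag_transition_action[OF lL _ Dp] diag_transition_action[OF lL _ Dd] in auto)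
qed

lemma sim_classical_self:
  assumes p: "prob_dist k p" and d: "tangent_dist k \<delta>"
  shows "classical_sim 1 k (cl k p) (cl k \<delta>) k p \<delta> (perm_channel k id)"
  unfolding classical_sim_def
proof (intro conjI ballI)
  have "channel k k (perm_channel k id)"
    by (rule channel_perm_channel) (use prob_dist_pos[OF p] in auto)
  thus "channel (1*k) k (perm_channel k id)" by simp
next
  fix X :: "complex mat" assume X: "X \<in> carrier_mat 1 1"
  have "\<forall>r<k. id r < k" by simp
  note pi = perm_channel_in[OF _ this]
  show "cl k p X = perm_channel k id (kron X (diagm k p))"
    using X by (simp add: kron_1x1[OF X diagm_carrier] pi cl_in) (rule eq_matI, auto)
  show "cl k \<delta> X = perm_channel k id (kron X (diagm k \<delta>))"
    using X by (simp add: kron_1x1[OF X diagm_carrier] pi cl_in) (rule eq_matI, auto)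
qed (use p d in auto)

lemma axiom_N_Gmax: "axiom_N Gmax"
  unfolding axiom_N_def
proof (intro allI impI, elim conjE)
  fix k :: nat and p \<delta> :: "nat \<Rightarrow> real" assume p: "prob_dist k p" and d: "tangent_dist k \<delta>"
  show "Gmax 1 k (cl k p) (cl k \<delta>) = J k p \<delta>"
  proof (rule antisym)
    show "Gmax 1 k (cl k p) (cl k \<delta>) \<le> J k p \<delta>"
      by (rule Gmax_le[OF sim_classical_self[OF p d]])
    show "J k p \<delta> \<le> Gmax 1 k (cl k p) (cl k \<delta>)"
      by (rule Gmax_ge, rule J_data_processing)
  qed
qed

lemma sim_scale:
  assumes sim: "classical_sim n m Phi D k q \<delta> Lam"
  shows "classical_sim n m Phi (scale t D) k q (\<lambda>y. t * \<delta> y) Lam"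
proof -
  have L: "channel (n*k) m Lam" and td: "tangent_dist k \<delta>"
    and e2: "\<forall>X\<in>carrier_mat n n. D X = Lam (kron X (diagm k \<delta>))" using sim by (auto simp: classical_sim_def)
  have lL: "lin_map (n*k) m Lam" using L by (simp add: channel_def)
  show ?thesis unfolding classical_sim_def
  proof (intro conjI ballI)
    show "tangent_dist k (\<lambda>y. t * \<delta> y)" using td by (simp add: tangent_dist_def flip: sum_distrib_left)
  next
    fix X :: "complex mat" assume X: "X \<in> carrier_mat n n"
    have KC: "kron X (diagm k \<delta>) \<in> carrier_mat (n*k) (n*k)" by (rule kron_carrier[OF X diagm_carrier])
    show "scale t D X = Lam (kron X (diagm k (\<lambda>y. t * \<delta> y)))"
      unfolding kron_diag_scale lin_smult[OF lL KC] scale_def using e2 X by simp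
  qed (use sim in \<open>auto simp: classical_sim_def\<close>)
qed

lemma J_scale:
  assumes t: "t \<noteq> 0" and qn: "\<forall>y<k. 0 \<le> q y"
  shows "J k q (\<lambda>y. t * \<delta> y) = ennreal (t^2) * J k q \<delta>"
proof -
  have tp: "t^2 > 0" using t by simp
  have "J k q (\<lambda>y. t * \<delta> y) = (\<Sum>y<k. ennreal (t^2) * (if q y = 0 then (if \<delta> y = 0 then 0 else \<infinity>) else ennreal ((\<delta> y)^2 / q y)))"
    unfolding J_def
  proof (rule sum.cong[OF refl])
    fix y assume y: "y \<in> {..<k}"
    show "(if q y = 0 then (if t * \<delta> y = 0 then 0 else \<infinity>) else ennreal ((t * \<delta> y)^2 / q y))
        = ennreal (t^2) * (if q y = 0 then (if \<delta> y = 0 then 0 else \<infinity>) else ennreal ((\<delta> y)^2 / q y))"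
    proof (cases "q y = 0")
      case True thus ?thesis using t tp by (auto simp: ennreal_mult_eq_top_iff)
    next
      case False
      have "ennreal ((t * \<delta> y)^2 / q y) = ennreal (t^2 * ((\<delta> y)^2 / q y))" by (simp add: power_mult_distrib)
      also have "\<dots> = ennreal (t^2) * ennreal ((\<delta> y)^2 / q y)" using qn y by (intro ennreal_mult) auto
      finally show ?thesis using False by simp
    qed
  qed
  also have "\<dots> = ennreal (t^2) * J k q \<delta>" unfolding J_def by (simp add: sum_distrib_left)
  finally show ?thesis .
qed

lemma Gmax_scale_le:
  assumes t: "t \<noteq> 0"
  shows "Gmax n m Phi (scale t D) \<le> ennreal (t^2) * Gmax n m Phi D"
proof -
  have cc: "ennreal (t^2) * ennreal (1/t^2) = 1"
    using t by (simp flip: ennreal_mult)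
  have "ennreal (1/t^2) * Gmax n m Phi (scale t D) \<le> Gmax n m Phi D"
  proof (rule Gmax_ge)
    fix k q \<delta> Lam assume sim: "classical_sim n m Phi D k q \<delta> Lam"
    have qn: "\<forall>y<k. 0 \<le> q y" using sim by (simp add: classical_sim_def prob_dist_def)
    have "Gmax n m Phi (scale t D) \<le> J k q (\<lambda>y. t * \<delta> y)" by (rule Gmax_le[OF sim_scale[OF sim]])
    also have "\<dots> = ennreal (t^2) * J k q \<delta>" by (rule J_scale[OF t qn])
    finally have "ennreal (1/t^2) * Gmax n m Phi (scale t D) \<le> ennreal (1/t^2) * (ennreal (t^2) * J k q \<delta>)"
      by (rule mult_left_mono) simp
    also have "\<dots> = J k q \<delta>" using cc by (simp add: mult.assoc[symmetric] mult.commute[of "ennreal (1/t^2)"])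
    finally show "ennreal (1/t^2) * Gmax n m Phi (scale t D) \<le> J k q \<delta>" .
  qed
  hence "ennreal (t^2) * (ennreal (1/t^2) * Gmax n m Phi (scale t D)) \<le> ennreal (t^2) * Gmax n m Phi D"
    by (rule mult_left_mono) simp
  thus ?thesis using cc by (simp add: mult.assoc[symmetric])
qed

lemma scale_inv: assumes t: "t \<noteq> 0" shows "scale (1/t) (scale t D) = D"
proof (rule ext)
  fix X show "scale (1/t) (scale t D) X = D X"
    unfolding scale_def by (rule eq_matI) (use t in auto)
qed

lemma Gmax_scale0:
  assumes Phi: "channel n m Phi" and D: "tangent n m D"
  shows "Gmax n m Phi (scale 0 D) = 0"
proof -
  have lPhi: "lin_map n m Phi" using Phi by (simp add: channel_def)
  have lD: "lin_map n m D" using D by (simp add: tangent_def)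
  have "classical_sim n m Phi (scale 0 D) 1 (\<lambda>_. 1) (\<lambda>_. 0) Phi"
    unfolding classical_sim_def
  proof (intro conjI ballI)
    show "channel (n*1) m Phi" using Phi by simp
  next
    fix X :: "complex mat" assume X: "X \<in> carrier_mat n n"
    have o: "1 \<cdot>\<^sub>m X = X" by (rule eq_matI) auto
    show "Phi X = Phi (kron X (diagm 1 (\<lambda>_. 1)))" unfolding kron_diag1[OF X] using o by simp
    have z: "0 \<cdot>\<^sub>m X = 0\<^sub>m n n" using X by (simp add: smult_zero_mat)
    show "scale 0 D X = Phi (kron X (diagm 1 (\<lambda>_. 0)))"
      unfolding kron_diag1[OF X] scale_def using z lin_zero[OF lPhi] by (simp add: smult_zero_mat lin_dim[OF lD])
  qed (auto simp: prob_dist_def tangent_dist_def)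
  hence "Gmax n m Phi (scale 0 D) \<le> J 1 (\<lambda>_. 1) (\<lambda>_. 0)" by (rule Gmax_le)
  also have "\<dots> = 0" by (simp add: J_def)
  finally show ?thesis by simp
qed

lemma channel_metric_Gmax: "channel_metric Gmax"
  unfolding channel_metric_def
proof (intro allI impI, elim conjE)
  fix n m :: nat and Phi D :: smap and t :: real assume Phi: "channel n m Phi" and D: "tangent n m D"
  show "Gmax n m Phi (scale t D) = ennreal (t^2) * Gmax n m Phi D"
  proof (cases "t = 0")
    case True thus ?thesis using Gmax_scale0[OF Phi D] by simp
  next
    case t: False
    have cc: "ennreal (t^2) * ennreal ((1/t)^2) = 1"
      using t by (simp flip: ennreal_mult add: power_divide)
    have "Gmax n m Phi D = Gmax n m Phi (scale (1/t) (scale t D))" by (simp add: scale_inv[OF t])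
    also have "\<dots> \<le> ennreal ((1/t)^2) * Gmax n m Phi (scale t D)" by (rule Gmax_scale_le) (use t in simp)
    finally have "ennreal (t^2) * Gmax n m Phi D \<le> ennreal (t^2) * (ennreal ((1/t)^2) * Gmax n m Phi (scale t D))"
      by (rule mult_left_mono) simp
    also have "\<dots> = Gmax n m Phi (scale t D)" using cc by (simp add: mult.assoc[symmetric])
    finally show ?thesis using Gmax_scale_le[OF t, of n m Phi D] by (intro antisym)
  qed
qed

theorem mainTheorem2:
  fixes G :: cmetric
  assumes "channel_metric G" and "axiom_M G" and "axiom_E G" and "axiom_N G"
  shows "(\<forall>n m Phi D. channel n m Phi \<and> tangent n m D \<longrightarrow> G n m Phi D \<le> Gmax n m Phi D)
    \<and> channel_metric Gmax \<and> axiom_M Gmax \<and> axiom_E Gmax \<and> axiom_N Gmax"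
proof (intro conjI allI impI)
  fix n m Phi D assume h: "channel n m Phi \<and> tangent n m D"
  show "G n m Phi D \<le> Gmax n m Phi D"
    by (rule Gmax_ge, rule G_le_J_of_sim[OF assms(2,3,4)]) (use h in auto)
qed (rule channel_metric_Gmax axiom_M_Gmax axiom_E_Gmax axiom_N_Gmax)+

end
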